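(* Let $u:\mathbb{R}^2\to\mathbb{R}^2$ be a continuous divergence-free vector field such that $|u|\neq0$ on a domain $\mathcal{D}\subset\mathbb{R}^2$. Then for any $a\in\mathcal D$, the solution $X(a,t)$ of $\frac{d}{dt}X(a,t)=u(X(a,t))$, $X(a,0)=a$, is unique (forward and backward in time) as long as it stays in $\mathcal{D}$. *)

theory Defs
  imports "HOL-Analysis.Analysis"
begin

definition grad2 :: "(real^2 \<Rightarrow> real) \<Rightarrow> real^2 \<Rightarrow> real^2" where
  "grad2 f x = (\<chi> i. frechet_derivative f (at x) (axis i 1))"

fun Ck2 :: "nat \<Rightarrow> (real^2 \<Rightarrow> real) \<Rightarrow> bool" where
  "Ck2 0 f = continuous_on UNIV f"
| "Ck2 (Suc k) f = (continuous_on UNIV f \<and> (\<forall>x. f differentiable (at x)) \<and>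
      (\<forall>i. Ck2 k (\<lambda>x. frechet_derivative f (at x) (axis i 1))))"

definition smooth2 :: "(real^2 \<Rightarrow> real) \<Rightarrow> bool" where
  "smooth2 f \<longleftrightarrow> (\<forall>k. Ck2 k f)"

definition test_fun2 :: "(real^2 \<Rightarrow> real) \<Rightarrow> bool" where
  "test_fun2 f \<longleftrightarrow> smooth2 f \<and> compact (closure {x. f x \<noteq> 0})"

definition weakly_div_free :: "(real^2 \<Rightarrow> real^2) \<Rightarrow> bool" where
  "weakly_div_free u \<longleftrightarrow>
     (\<forall>\<phi>. test_fun2 \<phi> \<longrightarrow> integral UNIV (\<lambda>x. u x \<bullet> grad2 \<phi> x) = 0)"

end

theory Submission
  imports Defs "HOL-Computational_Algebra.Polynomial"
begin

text \<open>Testing the weak divergence-free condition against smoothed indicator functions of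
  rectangles shows that the flux of \<open>u = (p, q)\<close> through the boundary of every rectangle vanishes.
  Hence the stream function \<open>\<psi>(x, y) = \<integral>\<^sub>y\<^sub>0\<^sup>y p(x, t) dt - \<integral>\<^sub>x\<^sub>0\<^sup>x q(s, y\<^sub>0) ds\<close> is
  differentiable with \<open>\<nabla>\<psi> = (-q, p)\<close>, so it is constant along every trajectory. Near a point where,
  say, \<open>p \<noteq> 0\<close>, \<open>\<psi>\<close> is strictly monotone in \<open>y\<close>, so its zero set is the graph of a continuous
  function \<open>\<gamma>\<close>. A trajectory through the point stays on this graph, and its first coordinate solves
  the scalar equation \<open>x' = p(x, \<gamma> x)\<close>, whose right-hand side is continuous and nowhere zero; such
  equations have unique solutions because the travel time \<open>\<integral> 1/g\<close> is strictly monotone.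
  Local uniqueness at every point where \<open>u \<noteq> 0\<close> then propagates along the connected time interval.\<close>

hide_const (open) Polynomial.content \<comment> \<open>keep \<open>content\<close> for the volume of boxes\<close>

section \<open>Smooth functions of one variable\<close>

coinductive smooth1 :: "(real \<Rightarrow> real) \<Rightarrow> bool" where
  smooth1I: "(\<And>x. (f has_real_derivative f' x) (at x)) \<Longrightarrow> smooth1 f' \<Longrightarrow> smooth1 f"

lemma
  assumes "smooth1 f"
  shows smooth1_has_real_derivative: "(f has_real_derivative deriv f x) (at x)"
    and smooth1_deriv: "smooth1 (deriv f)"
proof -
  from assms obtain f' where f': "\<And>x. (f has_real_derivative f' x) (at x)" and "smooth1 f'"
    by (cases rule: smooth1.cases) auto
  moreover have "deriv f = f'"
    using f' by (auto intro: DERIV_imp_deriv)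
  ultimately show "(f has_real_derivative deriv f x) (at x)" "smooth1 (deriv f)"
    by auto
qed

lemma smooth1_isCont: "smooth1 f \<Longrightarrow> isCont f x"
  using DERIV_isCont smooth1_has_real_derivative by blast

lemma smooth1_continuous_on: "smooth1 f \<Longrightarrow> continuous_on S f"
  by (simp add: continuous_at_imp_continuous_on smooth1_isCont)

lemma has_real_derivative_sum_products:
  assumes "\<forall>(a, b) \<in> set L. smooth1 a \<and> smooth1 b"
  shows "((\<lambda>x. \<Sum>(a, b) \<leftarrow> L. a x * b x) has_real_derivative
          (\<Sum>(a, b) \<leftarrow> concat (map (\<lambda>(a, b). [(deriv a, b), (a, deriv b)]) L). a x * b x)) (at x)"
  using assms
proof (induction L)
  case (Cons ab L)
  obtain a b where ab: "ab = (a, b)" by fastforce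
  with Cons.prems have "smooth1 a" "smooth1 b" by auto
  then have "((\<lambda>x. a x * b x) has_real_derivative deriv a x * b x + a x * deriv b x) (at x)"
    by (auto intro!: derivative_eq_intros smooth1_has_real_derivative)
  from DERIV_add[OF this Cons.IH] Cons.prems show ?case
    by (simp add: ab algebra_simps)
qed simp

text \<open>Smooth functions are closed under products because the product rule keeps derivatives
  of finite sums of products of smooth functions within the same class.\<close>
lemma smooth1_sum_products:
  assumes "\<forall>(a, b) \<in> set L. smooth1 a \<and> smooth1 b"
  shows "smooth1 (\<lambda>x. \<Sum>(a, b) \<leftarrow> L. a x * b x)"
  using assms
proof (coinduction arbitrary: L)
  case smooth1
  let ?L' = "concat (map (\<lambda>(a, b). [(deriv a, b), (a, deriv b)]) L)"
  have "\<forall>(a, b) \<in> set ?L'. smooth1 a \<and> smooth1 b"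
    using smooth1 smooth1_deriv by auto
  with has_real_derivative_sum_products[OF smooth1] show ?case
    by (intro exI[of _ "\<lambda>x. \<Sum>(a, b) \<leftarrow> L. a x * b x"] exI[of _ "\<lambda>x. \<Sum>(a, b) \<leftarrow> ?L'. a x * b x"]) blast
qed

lemma smooth1_const: "smooth1 (\<lambda>_. c)"
proof (coinduction arbitrary: c)
  case smooth1
  show ?case by (auto intro!: exI[of _ "\<lambda>_. 0"])
qed

lemma smooth1_mult: "smooth1 f \<Longrightarrow> smooth1 g \<Longrightarrow> smooth1 (\<lambda>x. f x * g x)"
  using smooth1_sum_products[of "[(f, g)]"] by simp

lemma smooth1_add: "smooth1 f \<Longrightarrow> smooth1 g \<Longrightarrow> smooth1 (\<lambda>x. f x + g x)"
  using smooth1_sum_products[of "[(f, \<lambda>_. 1), (g, \<lambda>_. 1)]"] smooth1_const by simp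

lemma smooth1_cmult: "smooth1 f \<Longrightarrow> smooth1 (\<lambda>x. c * f x)"
  using smooth1_mult[OF smooth1_const] by blast

lemma smooth1_diff: "smooth1 f \<Longrightarrow> smooth1 g \<Longrightarrow> smooth1 (\<lambda>x. f x - g x)"
  using smooth1_add[OF _ smooth1_cmult[of g "-1"]] by simp

lemma smooth1_scaled_affine: "smooth1 f \<Longrightarrow> smooth1 (\<lambda>x. c * f (\<alpha> * x + \<beta>))"
proof (coinduction arbitrary: f c)
  case smooth1
  then have "((\<lambda>x. c * f (\<alpha> * x + \<beta>)) has_real_derivative (c * \<alpha>) * deriv f (\<alpha> * x + \<beta>)) (at x)" for x
    by (auto intro!: derivative_eq_intros DERIV_chain2[OF smooth1_has_real_derivative])
  with smooth1_deriv[OF smooth1] show ?case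
    by (intro exI[of _ "\<lambda>x. c * f (\<alpha> * x + \<beta>)"] exI[of _ "\<lambda>x. (c * \<alpha>) * deriv f (\<alpha> * x + \<beta>)"]) blast
qed

lemma smooth1_affine: "smooth1 f \<Longrightarrow> smooth1 (\<lambda>x. f (\<alpha> * x + \<beta>))"
  using smooth1_scaled_affine[of f 1] by simp

text \<open>All derivatives of the flat function \<open>x \<mapsto> exp (-1/x)\<close> (extended by \<open>0\<close> to \<open>x \<le> 0\<close>) are of
  the form \<open>flat p\<close>.\<close>
definition flat :: "real poly \<Rightarrow> real \<Rightarrow> real" where
  "flat p x = (if x > 0 then poly p (1/x) * exp (-(1/x)) else 0)"

definition flat_dpoly :: "real poly \<Rightarrow> real poly" where
  "flat_dpoly p = [:0, 0, 1:] * (p - pderiv p)"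

lemma poly_times_exp_minus_tendsto_0: "((\<lambda>y. poly p y * exp (-y)) \<longlongrightarrow> (0::real)) at_top"
proof -
  have "(\<lambda>y. poly p y * exp (-y)) = (\<lambda>y. \<Sum>i\<le>degree p. coeff p i * (y ^ i / exp y))"
    by (simp add: fun_eq_iff poly_altdef exp_minus sum_distrib_right divide_inverse mult.assoc)
  then show ?thesis
    by (auto intro!: tendsto_null_sum simp del: times_divide_eq_right
        simp: times_divide_eq_right[symmetric] tendsto_mult_right_zero tendsto_power_div_exp_0)
qed

lemma flat_has_real_derivative_0: "(flat p has_real_derivative 0) (at 0)"
proof -
  \<comment> \<open>the difference quotient \<open>flat p y / y\<close> is \<open>flat (pCons 0 p) y\<close>\<close>
  have "((\<lambda>y. poly (pCons 0 p) y * exp (-y)) \<longlongrightarrow> (0::real)) at_top"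
    by (rule poly_times_exp_minus_tendsto_0)
  from filterlim_compose[OF this filterlim_inverse_at_top_right]
  have "((\<lambda>x. poly (pCons 0 p) (inverse x) * exp (-(inverse x))) \<longlongrightarrow> (0::real)) (at_right 0)"
    by simp
  then have right: "((\<lambda>y. (flat p y - flat p 0) / (y - 0)) \<longlongrightarrow> 0) (at_right 0)"
    by (rule Lim_transform_eventually)
      (auto intro: eventually_mono[OF eventually_at_right_less] simp: flat_def field_simps)
  have left: "((\<lambda>y. (flat p y - flat p 0) / (y - 0)) \<longlongrightarrow> 0) (at_left 0)"
    by (rule Lim_transform_eventually[where f="\<lambda>_. 0"])
      (auto intro: eventually_mono[OF eventually_at_left_real[of "-1"]] simp: flat_def)
  from filterlim_split_at[OF left right] show ?thesis
    by (simp add: has_field_derivative_iff)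
qed

lemma flat_has_real_derivative: "(flat p has_real_derivative flat (flat_dpoly p) x) (at x)"
proof (cases x "0::real" rule: linorder_cases)
  case equal
  then show ?thesis using flat_has_real_derivative_0 by (simp add: flat_def)
next
  case greater
  have "((\<lambda>x. poly p (1/x) * exp (-(1/x))) has_real_derivative
          poly (pderiv p) (1/x) * (- 1 / x^2) * exp (-(1/x)) + poly p (1/x) * (exp (-(1/x)) * (1/x^2))) (at x)"
    using greater
    by (auto intro!: derivative_eq_intros DERIV_chain2[OF poly_DERIV] simp: power2_eq_square field_simps)
  also have "poly (pderiv p) (1/x) * (- 1 / x^2) * exp (-(1/x)) + poly p (1/x) * (exp (-(1/x)) * (1/x^2))
      = flat (flat_dpoly p) x"
    using greater by (simp add: flat_def flat_dpoly_def algebra_simps power2_eq_square)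
  finally show ?thesis
    by (rule has_field_derivative_transform_within_open[where S="{0<..}"])
      (use greater in \<open>auto simp: flat_def\<close>)
next
  case less
  have "((\<lambda>_. 0) has_real_derivative flat (flat_dpoly p) x) (at x)"
    using less by (simp add: flat_def)
  then show ?thesis
    by (rule has_field_derivative_transform_within_open[where S="{..<0}"])
      (use less in \<open>auto simp: flat_def\<close>)
qed

lemma smooth1_flat: "smooth1 (flat p)"
proof (coinduction arbitrary: p)
  case smooth1
  show ?case using flat_has_real_derivative by blast
qed

definition bump :: "real \<Rightarrow> real" where
  "bump x = flat 1 x * flat 1 (1 - x)"

lemma smooth1_bump: "smooth1 bump"
  unfolding bump_def
  using smooth1_mult[OF smooth1_flat smooth1_affine[OF smooth1_flat, where \<alpha>="-1" and \<beta>=1]] by simp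

lemma bump_nonneg: "bump x \<ge> 0"
  by (simp add: bump_def flat_def)

lemma bump_eq_0: "x \<le> 0 \<or> x \<ge> 1 \<Longrightarrow> bump x = 0"
  by (auto simp: bump_def flat_def)

lemma bump_pos: "0 < x \<Longrightarrow> x < 1 \<Longrightarrow> bump x > 0"
  by (simp add: bump_def flat_def)

definition bump_primitive :: "real \<Rightarrow> real" where
  "bump_primitive x = integral {-1..x} bump"

lemma bump_primitive_eq_0_below: "x < -1/2 \<Longrightarrow> bump_primitive x = 0"
proof -
  assume "x < -1/2"
  then have "integral {-1..x} bump = integral {-1..x} (\<lambda>_. 0)"
    by (intro integral_cong) (auto intro: bump_eq_0)
  then show ?thesis by (simp add: bump_primitive_def)
qed

lemma has_real_derivative_bump_primitive: "(bump_primitive has_real_derivative bump x) (at x)"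
proof (cases "x > -1")
  case True
  have "(bump_primitive has_real_derivative bump x) (at x within {-1..x+1})"
    unfolding bump_primitive_def
    by (rule integral_has_real_derivative[OF smooth1_continuous_on[OF smooth1_bump]]) (use True in auto)
  then have "(bump_primitive has_real_derivative bump x) (at x within {-1<..<x+1})"
    by (rule DERIV_subset) auto
  then show ?thesis
    using True by (subst (asm) at_within_open) auto
next
  case False
  have "((\<lambda>_. 0) has_real_derivative bump x) (at x)"
    using False bump_eq_0[of x] by simp
  then show ?thesis
    by (rule has_field_derivative_transform_within_open[where S="{..< -1/2}"])
      (use False bump_primitive_eq_0_below in auto)
qed

lemma bump_primitive_diff:
  "x < y \<Longrightarrow> \<exists>z. x < z \<and> z < y \<and> bump_primitive y - bump_primitive x = (y - x) * bump z"
  using MVT2[OF _ has_real_derivative_bump_primitive] by blast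

lemma bump_primitive_eq_0: "x \<le> 0 \<Longrightarrow> bump_primitive x = 0"
  using bump_primitive_diff[of "-1" x] bump_primitive_eq_0_below[of "-1"] bump_primitive_eq_0_below[of x]
    bump_eq_0
  by (cases "x < -1") force+

lemma bump_primitive_eq_1: "x \<ge> 1 \<Longrightarrow> bump_primitive x = bump_primitive 1"
  using bump_primitive_diff[of 1 x] bump_eq_0 by (cases "x = 1") force+

lemma bump_primitive_mono: "x \<le> y \<Longrightarrow> bump_primitive x \<le> bump_primitive y"
  using bump_primitive_diff[of x y] bump_nonneg
  by (cases "x = y") (auto, smt (verit) mult_nonneg_nonneg)

lemma bump_primitive_1_pos: "bump_primitive 1 > 0"
  using bump_primitive_diff[of 0 1] bump_primitive_eq_0[of 0] bump_pos by force

definition smooth_step :: "real \<Rightarrow> real" where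
  "smooth_step x = bump_primitive x / bump_primitive 1"

definition step_density :: "real \<Rightarrow> real" where
  "step_density x = bump x / bump_primitive 1"

lemma has_real_derivative_smooth_step: "(smooth_step has_real_derivative step_density x) (at x)"
  unfolding smooth_step_def step_density_def
  using DERIV_cdivide[OF has_real_derivative_bump_primitive] by simp

lemma smooth1_step_density: "smooth1 step_density"
  unfolding step_density_def divide_inverse using smooth1_mult[OF smooth1_bump smooth1_const] .

lemma smooth1_smooth_step: "smooth1 smooth_step"
  using smooth1I[OF has_real_derivative_smooth_step smooth1_step_density] .

lemma smooth_step_eq_0: "x \<le> 0 \<Longrightarrow> smooth_step x = 0"
  by (simp add: smooth_step_def bump_primitive_eq_0)

lemma smooth_step_eq_1: "x \<ge> 1 \<Longrightarrow> smooth_step x = 1"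
  using bump_primitive_1_pos bump_primitive_eq_1[of x] by (simp add: smooth_step_def)

lemma smooth_step_mono: "x \<le> y \<Longrightarrow> smooth_step x \<le> smooth_step y"
  using bump_primitive_1_pos bump_primitive_mono
  by (auto simp: smooth_step_def intro: divide_right_mono)

lemma smooth_step_nonneg: "smooth_step x \<ge> 0"
  using smooth_step_mono[of 0 x] smooth_step_eq_0[of x] smooth_step_eq_0[of 0] by linarith

lemma smooth_step_le_1: "smooth_step x \<le> 1"
  using smooth_step_mono[of x 1] smooth_step_eq_1[of x] smooth_step_eq_1[of 1] by linarith

lemma step_density_nonneg: "step_density x \<ge> 0"
  using bump_primitive_1_pos bump_nonneg by (simp add: step_density_def)

lemma step_density_eq_0: "x \<le> 0 \<or> x \<ge> 1 \<Longrightarrow> step_density x = 0"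
  using bump_eq_0 by (simp add: step_density_def)

section \<open>Product test functions and Fubini on the plane\<close>

definition tensor2 :: "(real \<Rightarrow> real) \<Rightarrow> (real \<Rightarrow> real) \<Rightarrow> real^2 \<Rightarrow> real" where
  "tensor2 F G z = F (z$1) * G (z$2)"

lemma has_derivative_tensor2:
  assumes "smooth1 F" "smooth1 G"
  shows "(tensor2 F G has_derivative
           (\<lambda>h. deriv F (x$1) * G (x$2) * h$1 + F (x$1) * deriv G (x$2) * h$2)) (at x)"
proof -
  have partial: "((\<lambda>z. F (z$i)) has_derivative (\<lambda>h. deriv F (x$i) * h$i)) (at x)"
    if "smooth1 F" for F and i :: 2
    using has_derivative_compose[OF bounded_linear_imp_has_derivative[OF bounded_linear_vec_nth]
        smooth1_has_real_derivative[OF that, unfolded has_field_derivative_def]]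
    by (simp add: mult.commute)
  from has_derivative_mult[OF partial[OF assms(1), of 1] partial[OF assms(2), of 2]] show ?thesis
    unfolding tensor2_def by (simp add: algebra_simps)
qed

lemma
  assumes "smooth1 F" "smooth1 G"
  shows tensor2_partial_1: "frechet_derivative (tensor2 F G) (at x) (axis 1 1) = tensor2 (deriv F) G x"
    and tensor2_partial_2: "frechet_derivative (tensor2 F G) (at x) (axis 2 1) = tensor2 F (deriv G) x"
  using frechet_derivative_at[OF has_derivative_tensor2[OF assms, of x], symmetric]
  by (auto simp: tensor2_def axis_def)

lemma Ck2_tensor2: "smooth1 F \<Longrightarrow> smooth1 G \<Longrightarrow> Ck2 k (tensor2 F G)"
proof (induction k arbitrary: F G)
  case 0
  then show ?case
    using has_derivative_continuous[OF has_derivative_tensor2]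
    by (simp add: continuous_at_imp_continuous_on)
next
  case (Suc k)
  have "tensor2 F G differentiable (at x)" for x
    using has_derivative_tensor2[OF Suc.prems] differentiable_def by blast
  moreover have "Ck2 k (\<lambda>x. frechet_derivative (tensor2 F G) (at x) (axis i 1))" for i :: 2
    using exhaust_2[of i] Suc.IH[OF smooth1_deriv Suc.prems(2)] Suc.IH[OF Suc.prems(1) smooth1_deriv]
    by (auto simp: tensor2_partial_1[OF Suc.prems] tensor2_partial_2[OF Suc.prems] Suc.prems)
  ultimately show ?case
    by (simp add: continuous_at_imp_continuous_on differentiable_imp_continuous_within)
qed

lemma test_fun2_tensor2:
  assumes "smooth1 F" "smooth1 G"
    and "\<And>x. x < a \<or> x > b \<Longrightarrow> F x = 0" "\<And>y. y < c \<or> y > d \<Longrightarrow> G y = 0"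
  shows "test_fun2 (tensor2 F G)"
proof -
  have "{z. tensor2 F G z \<noteq> 0} \<subseteq> cbox (vector [a, c]) (vector [b, d])"
    using assms(3,4) by (force simp: tensor2_def mem_box_cart forall_2)
  then have "bounded {z. tensor2 F G z \<noteq> 0}"
    using bounded_cbox bounded_subset by blast
  then show ?thesis
    unfolding test_fun2_def smooth2_def using Ck2_tensor2[OF assms(1,2)] by simp
qed

lemma weakly_div_free_tensor2:
  assumes "weakly_div_free u" "smooth1 F" "smooth1 G"
    and "\<And>x. x < a \<or> x > b \<Longrightarrow> F x = 0" "\<And>y. y < c \<or> y > d \<Longrightarrow> G y = 0"
  shows "integral UNIV (\<lambda>z. u z $ 1 * (deriv F (z$1) * G (z$2)) + u z $ 2 * (F (z$1) * deriv G (z$2))) = 0"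
proof -
  have "grad2 (tensor2 F G) z = vector [deriv F (z$1) * G (z$2), F (z$1) * deriv G (z$2)]" for z
    using tensor2_partial_1[OF assms(2,3)] tensor2_partial_2[OF assms(2,3)]
    by (simp add: grad2_def vec_eq_iff forall_2 tensor2_def)
  moreover have "integral UNIV (\<lambda>z. u z \<bullet> grad2 (tensor2 F G) z) = 0"
    using assms(1) test_fun2_tensor2[OF assms(2-5)] unfolding weakly_div_free_def by blast
  ultimately show ?thesis
    by (simp add: inner_vec_def sum_2)
qed

lemma vector2_eta: "vector [z$1, z$2] = (z::real^2)"
  by (simp add: vec_eq_iff forall_2)

lemma continuous_on_vector2:
  assumes "continuous_on S f" "continuous_on S g"
  shows "continuous_on S (\<lambda>x. vector [f x, g x] :: real^2)"
proof -
  have "continuous_on S (\<lambda>x. vector [f x, g x] $ i)" for i :: 2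
    using exhaust_2[of i] assms by auto
  then have "continuous_on S (\<lambda>x. \<chi> i. vector [f x, g x] $ i :: real^2)"
    by (rule continuous_on_vec_lambda)
  then show ?thesis
    by (simp add: vec_lambda_eta)
qed

lemma continuous_on_vector2_pair: "continuous_on S (\<lambda>p::real \<times> real. vector [fst p, snd p] :: real^2)"
  by (intro continuous_on_vector2 continuous_intros)

lemma image_cbox_components2: "(\<lambda>z::real^2. (z$1, z$2)) ` cbox u v = cbox (u$1, u$2) (v$1, v$2)"
proof
  show "cbox (u$1, u$2) (v$1, v$2) \<subseteq> (\<lambda>z::real^2. (z$1, z$2)) ` cbox u v"
  proof
    fix p assume "p \<in> cbox (u$1, u$2) (v$1, v$2)"
    then have "vector [fst p, snd p] \<in> cbox u v"
      by (auto simp: mem_box_cart forall_2 cbox_Pair_eq)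
    then show "p \<in> (\<lambda>z::real^2. (z$1, z$2)) ` cbox u v"
      by (intro image_eqI) auto
  qed
qed (auto simp: mem_box_cart cbox_Pair_eq)

lemma image_cbox_vector2:
  "(\<lambda>p. vector [fst p, snd p] :: real^2) ` cbox (a, c) (b, d) = cbox (vector [a, c]) (vector [b, d])"
proof
  show "cbox (vector [a, c]) (vector [b, d]) \<subseteq> (\<lambda>p. vector [fst p, snd p] :: real^2) ` cbox (a, c) (b, d)"
  proof
    fix z :: "real^2" assume "z \<in> cbox (vector [a, c]) (vector [b, d])"
    then have "(z$1, z$2) \<in> cbox (a, c) (b, d)"
      by (auto simp: mem_box_cart forall_2 cbox_Pair_eq)
    then show "z \<in> (\<lambda>p. vector [fst p, snd p] :: real^2) ` cbox (a, c) (b, d)"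
      by (intro image_eqI[where x="(z$1, z$2)"]) (auto simp: vector2_eta)
  qed
qed (auto simp: mem_box_cart forall_2 cbox_Pair_eq)

lemma has_integral_iterated_real2:
  fixes f :: "real^2 \<Rightarrow> real"
  assumes cont: "continuous_on UNIV f"
    and zero: "\<And>z. z \<notin> cbox (vector [a, c]) (vector [b, d]) \<Longrightarrow> f z = 0"
  shows "(f has_integral integral {a..b} (\<lambda>x. integral {c..d} (\<lambda>y. f (vector [x, y])))) UNIV"
proof -
  let ?F = "\<lambda>p. f (vector [fst p, snd p])"
  let ?I = "integral (cbox (a, c) (b, d)) ?F"
  have cF: "continuous_on (cbox (a, c) (b, d)) ?F"
    by (rule continuous_on_compose2[OF cont continuous_on_vector2_pair]) auto
  have "((\<lambda>z::real^2. ?F (z$1, z$2)) has_integral (1 / 1) *\<^sub>R ?I)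
      ((\<lambda>p. vector [fst p, snd p] :: real^2) ` cbox (a, c) (b, d))"
  proof (rule has_integral_twiddle)
    show "\<And>u v. \<exists>w z. (\<lambda>z::real^2. (z$1, z$2)) ` cbox u v = cbox w z"
      using image_cbox_components2 by blast
    show "\<And>u v. \<exists>w z. (\<lambda>p. vector [fst p, snd p] :: real^2) ` cbox u v = cbox w z"
      by (auto simp: image_cbox_vector2 split_paired_all)
    show "\<And>u v. content ((\<lambda>z::real^2. (z$1, z$2)) ` cbox u v) = 1 * content (cbox u v)"
      by (auto simp: image_cbox_components2 content_Pair content_cbox_if_cart UNIV_2 mem_box_cart forall_2
          set_eq_iff)
    show "(?F has_integral ?I) (cbox (a, c) (b, d))"
      using integrable_continuous[OF cF] by blast
  qed (auto simp: vector2_eta intro!: continuous_intros)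
  then have "(f has_integral ?I) (cbox (vector [a, c]) (vector [b, d]))"
    by (simp add: image_cbox_vector2 vector2_eta)
  then have "(f has_integral ?I) UNIV"
    by (rule has_integral_on_superset) (use zero in auto)
  with integral_prod_continuous[OF cF] show ?thesis
    by (simp add: cbox_interval)
qed

lemma has_integral_iterated_real2_swap:
  fixes f :: "real^2 \<Rightarrow> real"
  assumes cont: "continuous_on UNIV f"
    and zero: "\<And>z. z \<notin> cbox (vector [a, c]) (vector [b, d]) \<Longrightarrow> f z = 0"
  shows "(f has_integral integral {c..d} (\<lambda>y. integral {a..b} (\<lambda>x. f (vector [x, y])))) UNIV"
proof -
  have "continuous_on (cbox (a, c) (b, d)) (\<lambda>(x, y). f (vector [x, y]))"
    using continuous_on_compose2[OF cont continuous_on_vector2_pair] by (simp add: case_prod_beta')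
  then have "integral {a..b} (\<lambda>x. integral {c..d} (\<lambda>y. f (vector [x, y])))
      = integral {c..d} (\<lambda>y. integral {a..b} (\<lambda>x. f (vector [x, y])))"
    using integral_swap_continuous[of a c b d "\<lambda>x y. f (vector [x, y])"] by (simp add: cbox_interval)
  with has_integral_iterated_real2[where a=a and b=b and c=c and d=d, OF cont zero] show ?thesis
    by simp
qed

section \<open>The flux through a rectangle vanishes\<close>

definition approx_delta :: "real \<Rightarrow> real \<Rightarrow> real \<Rightarrow> real" where
  "approx_delta \<alpha> \<epsilon> x = step_density ((x - \<alpha>) / \<epsilon>) / \<epsilon>"

definition cutoff :: "real \<Rightarrow> real \<Rightarrow> real \<Rightarrow> real \<Rightarrow> real" where
  "cutoff a b \<epsilon> x = smooth_step ((x - a) / \<epsilon>) - smooth_step ((x - (b - \<epsilon>)) / \<epsilon>)"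

lemma has_real_derivative_smooth_step_affine:
  "((\<lambda>x. smooth_step ((x - \<alpha>) / \<epsilon>)) has_real_derivative approx_delta \<alpha> \<epsilon> x) (at x)"
proof -
  have "((\<lambda>x. (x - \<alpha>) / \<epsilon>) has_real_derivative 1 / \<epsilon>) (at x)"
    using DERIV_cdivide[OF DERIV_diff[OF DERIV_ident DERIV_const]] by simp
  from DERIV_chain2[OF has_real_derivative_smooth_step this] show ?thesis
    by (simp add: approx_delta_def)
qed

lemma has_real_derivative_cutoff:
  "(cutoff a b \<epsilon> has_real_derivative approx_delta a \<epsilon> x - approx_delta (b - \<epsilon>) \<epsilon> x) (at x)"
  unfolding cutoff_def by (intro DERIV_diff has_real_derivative_smooth_step_affine)

lemma smooth1_cutoff: "smooth1 (cutoff a b \<epsilon>)"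
proof -
  have "smooth1 (\<lambda>x. smooth_step ((x - \<alpha>) / \<epsilon>))" for \<alpha>
    using smooth1_affine[OF smooth1_smooth_step, of "1 / \<epsilon>" "- \<alpha> / \<epsilon>"]
    by (simp add: diff_divide_distrib)
  then show ?thesis
    unfolding cutoff_def by (intro smooth1_diff)
qed

lemma deriv_cutoff: "deriv (cutoff a b \<epsilon>) x = approx_delta a \<epsilon> x - approx_delta (b - \<epsilon>) \<epsilon> x"
  using DERIV_imp_deriv[OF has_real_derivative_cutoff] .

lemma continuous_on_cutoff: "continuous_on S (cutoff a b \<epsilon>)"
  by (rule smooth1_continuous_on[OF smooth1_cutoff])

lemma continuous_on_approx_delta: "continuous_on S (approx_delta \<alpha> \<epsilon>)"
  unfolding approx_delta_def divide_inverse
  by (intro continuous_intros continuous_on_compose2[OF smooth1_continuous_on[OF smooth1_step_density]])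
    auto

lemma approx_delta_nonneg: "\<epsilon> > 0 \<Longrightarrow> approx_delta \<alpha> \<epsilon> x \<ge> 0"
  by (simp add: approx_delta_def step_density_nonneg)

lemma approx_delta_eq_0: "\<epsilon> > 0 \<Longrightarrow> x \<le> \<alpha> \<or> x \<ge> \<alpha> + \<epsilon> \<Longrightarrow> approx_delta \<alpha> \<epsilon> x = 0"
  by (auto simp: approx_delta_def field_simps intro!: step_density_eq_0)

lemma has_integral_approx_delta:
  assumes "\<epsilon> > 0" "a \<le> \<alpha>" "\<alpha> + \<epsilon> \<le> b"
  shows "(approx_delta \<alpha> \<epsilon> has_integral 1) {a..b}"
proof -
  have "(approx_delta \<alpha> \<epsilon> has_integral smooth_step ((b - \<alpha>) / \<epsilon>) - smooth_step ((a - \<alpha>) / \<epsilon>)) {a..b}"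
    using assms has_real_derivative_smooth_step_affine
    by (intro fundamental_theorem_of_calculus)
      (auto simp: has_real_derivative_iff_has_vector_derivative intro: has_vector_derivative_at_within)
  moreover have "smooth_step ((b - \<alpha>) / \<epsilon>) = 1" "smooth_step ((a - \<alpha>) / \<epsilon>) = 0"
    using assms by (auto intro: smooth_step_eq_1 smooth_step_eq_0 simp: field_simps)
  ultimately show ?thesis by simp
qed

lemma integral_approx_delta_close:
  fixes p :: "real \<Rightarrow> real"
  assumes "\<epsilon> > 0" "a \<le> \<alpha>" "\<alpha> + \<epsilon> \<le> b" "continuous_on {a..b} p"
    and close: "\<And>x. \<alpha> \<le> x \<Longrightarrow> x \<le> \<alpha> + \<epsilon> \<Longrightarrow> \<bar>p x - p0\<bar> \<le> e"
  shows "\<bar>integral {a..b} (\<lambda>x. p x * approx_delta \<alpha> \<epsilon> x) - p0\<bar> \<le> e"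
proof -
  let ?\<delta> = "approx_delta \<alpha> \<epsilon>"
  have mass: "integral {a..b} ?\<delta> = 1"
    using integral_unique[OF has_integral_approx_delta[OF assms(1-3)]] .
  have int: "(\<lambda>x. f x * ?\<delta> x) integrable_on {a..b}" if "continuous_on {a..b} f" for f
    by (intro integrable_continuous_interval continuous_intros continuous_on_approx_delta that)
  have "integral {a..b} (\<lambda>x. p x * ?\<delta> x) - p0 = integral {a..b} (\<lambda>x. (p x - p0) * ?\<delta> x)"
    using integral_diff[OF int[OF assms(4)] int[of "\<lambda>_. p0"]] mass by (simp add: left_diff_distrib)
  also have "\<bar>\<dots>\<bar> \<le> integral {a..b} (\<lambda>x. e * ?\<delta> x)"
  proof -
    have bound: "\<bar>(p x - p0) * ?\<delta> x\<bar> \<le> e * ?\<delta> x" for x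
    proof (cases "\<alpha> \<le> x \<and> x \<le> \<alpha> + \<epsilon>")
      case True
      then show ?thesis
        using close approx_delta_nonneg[OF assms(1)] by (simp add: abs_mult mult_right_mono)
    qed (use approx_delta_eq_0[OF assms(1)] in auto)
    have "continuous_on {a..b} (\<lambda>x. p x - p0)"
      using assms(4) by (intro continuous_intros)
    from integral_norm_bound_integral[OF int[OF this] int[of "\<lambda>_. e"]] bound show ?thesis
      by simp
  qed
  finally show ?thesis
    using mass by simp
qed

context
  fixes a b \<epsilon> :: real
  assumes \<epsilon>: "\<epsilon> > 0" "a + 2 * \<epsilon> \<le> b"
begin

lemma cutoff_eq_0: "x \<le> a \<or> x \<ge> b \<Longrightarrow> cutoff a b \<epsilon> x = 0"
  using \<epsilon> by (auto simp: cutoff_def smooth_step_eq_0 smooth_step_eq_1 divide_nonpos_pos le_divide_eq)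

lemma cutoff_eq_1: "a + \<epsilon> \<le> x \<Longrightarrow> x \<le> b - \<epsilon> \<Longrightarrow> cutoff a b \<epsilon> x = 1"
  using \<epsilon> by (simp add: cutoff_def smooth_step_eq_0 smooth_step_eq_1 le_divide_eq divide_nonpos_pos)

lemma cutoff_bounds: "0 \<le> cutoff a b \<epsilon> x \<and> cutoff a b \<epsilon> x \<le> 1"
proof (cases "x \<le> b - \<epsilon>")
  case True
  then have "smooth_step ((x - (b - \<epsilon>)) / \<epsilon>) = 0"
    using \<epsilon> by (simp add: smooth_step_eq_0 divide_nonpos_pos)
  then show ?thesis
    using smooth_step_nonneg smooth_step_le_1 by (simp add: cutoff_def)
next
  case False
  then have "smooth_step ((x - a) / \<epsilon>) = 1"
    using \<epsilon> by (simp add: smooth_step_eq_1 le_divide_eq)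
  then show ?thesis
    using smooth_step_nonneg smooth_step_le_1 by (simp add: cutoff_def)
qed

lemma deriv_cutoff_eq_0: "x < a \<or> x > b \<Longrightarrow> deriv (cutoff a b \<epsilon>) x = 0"
  using \<epsilon> approx_delta_eq_0[of \<epsilon> x a] approx_delta_eq_0[of \<epsilon> x "b - \<epsilon>"]
  by (auto simp: deriv_cutoff)

lemma integral_times_cutoff_close:
  fixes p :: "real \<Rightarrow> real"
  assumes p: "continuous_on {a..b} p" "\<And>x. x \<in> {a..b} \<Longrightarrow> \<bar>p x\<bar> \<le> M"
  shows "\<bar>integral {a..b} (\<lambda>x. p x * cutoff a b \<epsilon> x) - integral {a..b} p\<bar> \<le> 2 * \<epsilon> * M"
proof -
  define g where "g = (\<lambda>x. p x * (cutoff a b \<epsilon> x - 1))"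
  have g: "continuous_on S g" if "S \<subseteq> {a..b}" for S
    unfolding g_def by (intro continuous_intros continuous_on_subset[OF p(1) that] continuous_on_cutoff)
  have gM: "\<bar>g x\<bar> \<le> M" if "x \<in> {a..b}" for x
  proof -
    have "\<bar>g x\<bar> \<le> \<bar>p x\<bar> * 1"
      unfolding g_def abs_mult using cutoff_bounds[of x] by (intro mult_left_mono) auto
    with p(2)[OF that] show ?thesis by simp
  qed
  have "norm (integral {a..a+\<epsilon>} g) \<le> M * (a + \<epsilon> - a)"
    using \<epsilon> gM by (intro integral_bound g) auto
  moreover have "norm (integral {b-\<epsilon>..b} g) \<le> M * (b - (b - \<epsilon>))"
    using \<epsilon> gM by (intro integral_bound g) auto
  ultimately have ends: "\<bar>integral {a..a+\<epsilon>} g\<bar> \<le> \<epsilon> * M" "\<bar>integral {b-\<epsilon>..b} g\<bar> \<le> \<epsilon> * M"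
    by (simp_all add: mult.commute)
  have "integral {a+\<epsilon>..b-\<epsilon>} g = integral {a+\<epsilon>..b-\<epsilon>} (\<lambda>_. 0)"
    by (intro integral_cong) (simp add: g_def cutoff_eq_1)
  then have middle: "integral {a+\<epsilon>..b-\<epsilon>} g = 0"
    by simp
  have int: "g integrable_on {s..t}" if "a \<le> s" "t \<le> b" for s t
    using g[of "{s..t}"] that by (auto intro: integrable_continuous_interval)
  have "integral {a..b} (\<lambda>x. p x * cutoff a b \<epsilon> x) - integral {a..b} p = integral {a..b} g"
  proof -
    have "(\<lambda>x. p x * cutoff a b \<epsilon> x) integrable_on {a..b}" "p integrable_on {a..b}"
      by (intro integrable_continuous_interval continuous_intros p(1) continuous_on_cutoff)+
    from integral_diff[OF this] show ?thesis
      by (simp add: g_def right_diff_distrib)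
  qed
  also have "\<dots> = integral {a..a+\<epsilon>} g + integral {a+\<epsilon>..b-\<epsilon>} g + integral {b-\<epsilon>..b} g"
    using \<epsilon> Henstock_Kurzweil_Integration.integral_combine[OF _ _ int, of a "a+\<epsilon>" b]
      Henstock_Kurzweil_Integration.integral_combine[OF _ _ int, of "a+\<epsilon>" "b-\<epsilon>" b]
    by simp
  finally show ?thesis
    using ends middle by (simp only: abs_le_iff mult.assoc) linarith
qed

end

lemma continuous_on_curry1: "continuous_on UNIV (\<lambda>z. P (fst z) (snd z)) \<Longrightarrow> continuous_on S (P t)"
  by (rule continuous_on_compose2[of UNIV "\<lambda>z. P (fst z) (snd z)" S "\<lambda>s. (t, s)", simplified])
    (auto intro!: continuous_intros)

lemma continuous_on_curry2: "continuous_on UNIV (\<lambda>z. P (fst z) (snd z)) \<Longrightarrow> continuous_on S (\<lambda>s. P s t)"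
  by (rule continuous_on_compose2[of UNIV "\<lambda>z. P (fst z) (snd z)" S "\<lambda>s. (s, t)", simplified])
    (auto intro!: continuous_intros)

lemma integral_deriv_cutoff_close:
  fixes p :: "real \<Rightarrow> real"
  assumes \<epsilon>: "\<epsilon> > 0" "a + 2 * \<epsilon> \<le> b" and p: "continuous_on {a..b} p"
    and osc: "\<And>s s'. s \<in> {a..b} \<Longrightarrow> s' \<in> {a..b} \<Longrightarrow> \<bar>s - s'\<bar> \<le> \<epsilon> \<Longrightarrow> \<bar>p s - p s'\<bar> \<le> e"
  shows "\<bar>integral {a..b} (\<lambda>s. p s * deriv (cutoff a b \<epsilon>) s) - (p a - p b)\<bar> \<le> 2 * e"
proof -
  have int: "(\<lambda>s. p s * approx_delta \<alpha> \<epsilon> s) integrable_on {a..b}" for \<alpha>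
    by (intro integrable_continuous_interval continuous_intros p continuous_on_approx_delta)
  have "\<bar>integral {a..b} (\<lambda>s. p s * approx_delta a \<epsilon> s) - p a\<bar> \<le> e"
    by (rule integral_approx_delta_close[OF \<epsilon>(1) _ _ p]) (use \<epsilon> osc in auto)
  moreover have "\<bar>integral {a..b} (\<lambda>s. p s * approx_delta (b - \<epsilon>) \<epsilon> s) - p b\<bar> \<le> e"
    by (rule integral_approx_delta_close[OF \<epsilon>(1) _ _ p]) (use \<epsilon> osc in auto)
  moreover have "integral {a..b} (\<lambda>s. p s * deriv (cutoff a b \<epsilon>) s)
      = integral {a..b} (\<lambda>s. p s * approx_delta a \<epsilon> s) - integral {a..b} (\<lambda>s. p s * approx_delta (b - \<epsilon>) \<epsilon> s)"
    using integral_diff[OF int int] by (simp add: deriv_cutoff right_diff_distrib)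
  ultimately show ?thesis
    by (simp only: abs_le_iff) linarith
qed

lemma iterated_integral_cutoff_close:
  fixes P :: "real \<Rightarrow> real \<Rightarrow> real"
  assumes P: "continuous_on UNIV (\<lambda>z. P (fst z) (snd z))"
    and \<epsilon>: "\<epsilon> > 0" "a + 2 * \<epsilon> \<le> b" "c + 2 * \<epsilon> \<le> d"
    and bound: "\<And>t s. t \<in> {c..d} \<Longrightarrow> s \<in> {a..b} \<Longrightarrow> \<bar>P t s\<bar> \<le> M"
    and osc: "\<And>t s s'. t \<in> {c..d} \<Longrightarrow> s \<in> {a..b} \<Longrightarrow> s' \<in> {a..b} \<Longrightarrow> \<bar>s - s'\<bar> \<le> \<epsilon> \<Longrightarrow>
      \<bar>P t s - P t s'\<bar> \<le> e"
  shows "\<bar>integral {c..d} (\<lambda>t. integral {a..b} (\<lambda>s. P t s * deriv (cutoff a b \<epsilon>) s) * cutoff c d \<epsilon> t)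
          - integral {c..d} (\<lambda>t. P t a - P t b)\<bar> \<le> 2 * e * (d - c) + 4 * \<epsilon> * M"
proof -
  define h where "h t = integral {a..b} (\<lambda>s. P t s * deriv (cutoff a b \<epsilon>) s)" for t
  define q where "q t = P t a - P t b" for t
  have hc: "continuous_on {c..d} h"
  proof -
    have "continuous_on ({c..d} \<times> cbox a b) (\<lambda>(t, s). P t s * deriv (cutoff a b \<epsilon>) s)"
      unfolding deriv_cutoff case_prod_beta'
      by (intro continuous_intros continuous_on_subset[OF P]
          continuous_on_compose2[OF continuous_on_approx_delta]) auto
    from integral_continuous_on_param[OF this] show ?thesis
      by (simp add: h_def cbox_interval)
  qed
  have qc: "continuous_on {c..d} q"
    unfolding q_def by (intro continuous_intros continuous_on_curry2[OF P])
  have hq: "\<bar>h t - q t\<bar> \<le> 2 * e" if "t \<in> {c..d}" for t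
    unfolding h_def q_def using that by (intro integral_deriv_cutoff_close \<epsilon>(1,2) continuous_on_curry1[OF P] osc)
  have "\<bar>integral {c..d} (\<lambda>t. h t * cutoff c d \<epsilon> t) - integral {c..d} (\<lambda>t. q t * cutoff c d \<epsilon> t)\<bar>
      \<le> 2 * e * (d - c)"
  proof -
    have "(\<lambda>t. h t * cutoff c d \<epsilon> t) integrable_on {c..d}" "(\<lambda>t. q t * cutoff c d \<epsilon> t) integrable_on {c..d}"
      by (intro integrable_continuous_interval continuous_intros hc qc continuous_on_cutoff)+
    from integral_diff[OF this]
    have "integral {c..d} (\<lambda>t. h t * cutoff c d \<epsilon> t) - integral {c..d} (\<lambda>t. q t * cutoff c d \<epsilon> t)
        = integral {c..d} (\<lambda>t. (h t - q t) * cutoff c d \<epsilon> t)"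
      by (simp add: left_diff_distrib)
    also have "norm \<dots> \<le> (2 * e) * (d - c)"
    proof (rule integral_bound)
      fix t assume "t \<in> {c..d}"
      then show "norm ((h t - q t) * cutoff c d \<epsilon> t) \<le> 2 * e"
        using hq[of t] cutoff_bounds[OF \<epsilon>(1,3), of t] mult_mono[of "\<bar>h t - q t\<bar>" "2 * e" _ 1]
        by (auto simp: abs_mult)
    qed (use \<epsilon> in \<open>auto intro!: continuous_intros hc qc continuous_on_cutoff\<close>)
    finally show ?thesis by simp
  qed
  moreover have "\<bar>integral {c..d} (\<lambda>t. q t * cutoff c d \<epsilon> t) - integral {c..d} q\<bar> \<le> 2 * \<epsilon> * (2 * M)"
  proof (rule integral_times_cutoff_close[OF \<epsilon>(1,3) qc])
    fix t assume "t \<in> {c..d}"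
    with \<epsilon> bound[of t a] bound[of t b] show "\<bar>q t\<bar> \<le> 2 * M"
      by (simp add: q_def)
  qed
  ultimately show ?thesis
    unfolding h_def q_def by (simp only: abs_le_iff) linarith
qed

lemma weakly_div_free_cutoff_identity:
  fixes u :: "real^2 \<Rightarrow> real^2"
  assumes u: "continuous_on UNIV u" "weakly_div_free u"
    and \<epsilon>: "\<epsilon> > 0" "a + 2 * \<epsilon> \<le> b" "c + 2 * \<epsilon> \<le> d"
  shows "integral {c..d} (\<lambda>t. integral {a..b} (\<lambda>s. u (vector [s, t]) $ 1 * deriv (cutoff a b \<epsilon>) s) * cutoff c d \<epsilon> t)
       + integral {a..b} (\<lambda>t. integral {c..d} (\<lambda>s. u (vector [t, s]) $ 2 * deriv (cutoff c d \<epsilon>) s) * cutoff a b \<epsilon> t)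
       = 0"
proof -
  define F where "F = cutoff a b \<epsilon>"
  define G where "G = cutoff c d \<epsilon>"
  define A where "A z = u z $ 1 * (deriv F (z$1) * G (z$2))" for z
  define B where "B z = u z $ 2 * (F (z$1) * deriv G (z$2))" for z
  have F0: "F x = 0" "deriv F x = 0" if "x < a \<or> x > b" for x
    using that cutoff_eq_0[OF \<epsilon>(1,2)] deriv_cutoff_eq_0[OF \<epsilon>(1,2)] by (auto simp: F_def)
  have G0: "G y = 0" "deriv G y = 0" if "y < c \<or> y > d" for y
    using that cutoff_eq_0[OF \<epsilon>(1,3)] deriv_cutoff_eq_0[OF \<epsilon>(1,3)] by (auto simp: G_def)
  have outside: "A z = 0" "B z = 0" if "z \<notin> cbox (vector [a, c]) (vector [b, d])" for z
  proof -
    from that have "z$1 < a \<or> z$1 > b \<or> z$2 < c \<or> z$2 > d"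
      by (auto simp: mem_box_cart forall_2)
    then show "A z = 0" "B z = 0"
      using F0 G0 by (auto simp: A_def B_def)
  qed
  have smooth: "smooth1 F" "smooth1 G" "smooth1 (deriv F)" "smooth1 (deriv G)"
    by (simp_all add: F_def G_def smooth1_cutoff smooth1_deriv)
  have cont: "continuous_on UNIV (\<lambda>z::real^2. f (z$i))" if "smooth1 f" for f i
    by (rule continuous_on_compose2[OF smooth1_continuous_on[OF that]]) (auto intro: continuous_intros)
  have IA: "(A has_integral integral {c..d} (\<lambda>y. integral {a..b} (\<lambda>x. A (vector [x, y])))) UNIV"
  proof (rule has_integral_iterated_real2_swap)
    show "continuous_on UNIV A"
      unfolding A_def by (intro continuous_intros u cont smooth)
  qed (use outside in auto)
  moreover have IB: "(B has_integral integral {a..b} (\<lambda>x. integral {c..d} (\<lambda>y. B (vector [x, y])))) UNIV"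
  proof (rule has_integral_iterated_real2)
    show "continuous_on UNIV B"
      unfolding B_def by (intro continuous_intros u cont smooth)
  qed (use outside in auto)
  moreover have "integral UNIV (\<lambda>z. A z + B z) = 0"
    unfolding A_def B_def by (rule weakly_div_free_tensor2[OF u(2) smooth(1,2) F0(1) G0(1)])
  ultimately have "integral {c..d} (\<lambda>y. integral {a..b} (\<lambda>x. A (vector [x, y])))
      + integral {a..b} (\<lambda>x. integral {c..d} (\<lambda>y. B (vector [x, y]))) = 0"
    using integral_unique[OF has_integral_add[OF IA IB]] by simp
  moreover have "integral {a..b} (\<lambda>x. A (vector [x, y]))
      = integral {a..b} (\<lambda>s. u (vector [s, y]) $ 1 * deriv F s) * G y" for y
    using integral_mult_left[of "{a..b}" "\<lambda>s. u (vector [s, y]) $ 1 * deriv F s" "G y"]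
    by (simp add: A_def mult.assoc)
  moreover have "integral {c..d} (\<lambda>y. B (vector [x, y]))
      = integral {c..d} (\<lambda>s. u (vector [x, s]) $ 2 * deriv G s) * F x" for x
    using integral_mult_left[of "{c..d}" "\<lambda>s. u (vector [x, s]) $ 2 * deriv G s" "F x"]
    by (simp add: B_def ac_simps)
  ultimately show ?thesis
    by (simp add: F_def G_def)
qed

lemma dist_vector2_le: "dist (vector [x, y] :: real^2) (vector [x', y']) \<le> \<bar>x - x'\<bar> + \<bar>y - y'\<bar>"
  using norm_le_l1_cart[of "vector [x, y] - vector [x', y'] :: real^2"] by (simp add: dist_norm sum_2)

lemma flux_rectangle_bound:
  fixes u :: "real^2 \<Rightarrow> real^2"
  assumes u: "continuous_on UNIV u" "weakly_div_free u"
    and \<epsilon>: "\<epsilon> > 0" "a + 2 * \<epsilon> \<le> b" "c + 2 * \<epsilon> \<le> d"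
    and bound: "\<And>z i. z \<in> cbox (vector [a, c]) (vector [b, d]) \<Longrightarrow> \<bar>u z $ i\<bar> \<le> M"
    and osc: "\<And>z z' i. z \<in> cbox (vector [a, c]) (vector [b, d]) \<Longrightarrow> z' \<in> cbox (vector [a, c]) (vector [b, d])
      \<Longrightarrow> dist z z' \<le> \<epsilon> \<Longrightarrow> \<bar>u z $ i - u z' $ i\<bar> \<le> e"
  shows "\<bar>integral {c..d} (\<lambda>y. u (vector [b, y]) $ 1 - u (vector [a, y]) $ 1)
       + integral {a..b} (\<lambda>x. u (vector [x, d]) $ 2 - u (vector [x, c]) $ 2)\<bar>
       \<le> 2 * e * ((b - a) + (d - c)) + 8 * \<epsilon> * M"
proof -
  have box: "(vector [x, y] :: real^2) \<in> cbox (vector [a, c]) (vector [b, d])" if "x \<in> {a..b}" "y \<in> {c..d}" for x y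
    using that by (simp add: mem_box_cart forall_2)
  have cont: "continuous_on UNIV (\<lambda>z. u (vector [fst z, snd z]) $ i)"
    "continuous_on UNIV (\<lambda>z. u (vector [snd z, fst z]) $ i)" for i
    by (auto intro!: continuous_on_compose2[OF u(1)] continuous_on_vector2 continuous_intros)
  have "\<bar>integral {c..d}
        (\<lambda>t. integral {a..b} (\<lambda>s. u (vector [s, t]) $ 1 * deriv (cutoff a b \<epsilon>) s) * cutoff c d \<epsilon> t)
      - integral {c..d} (\<lambda>t. u (vector [a, t]) $ 1 - u (vector [b, t]) $ 1)\<bar> \<le> 2 * e * (d - c) + 4 * \<epsilon> * M"
  proof (rule iterated_integral_cutoff_close[OF cont(2) \<epsilon>])
    fix t s s' assume "t \<in> {c..d}" "s \<in> {a..b}" "s' \<in> {a..b}" "\<bar>s - s'\<bar> \<le> \<epsilon>"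
    then show "\<bar>u (vector [s, t]) $ 1 - u (vector [s', t]) $ 1\<bar> \<le> e"
      using osc box dist_vector2_le[of s t s' t] by simp
  qed (use bound box in auto)
  moreover have "\<bar>integral {a..b}
        (\<lambda>t. integral {c..d} (\<lambda>s. u (vector [t, s]) $ 2 * deriv (cutoff c d \<epsilon>) s) * cutoff a b \<epsilon> t)
      - integral {a..b} (\<lambda>t. u (vector [t, c]) $ 2 - u (vector [t, d]) $ 2)\<bar> \<le> 2 * e * (b - a) + 4 * \<epsilon> * M"
  proof (rule iterated_integral_cutoff_close[OF cont(1) \<epsilon>(1,3,2)])
    fix t s s' assume "t \<in> {a..b}" "s \<in> {c..d}" "s' \<in> {c..d}" "\<bar>s - s'\<bar> \<le> \<epsilon>"
    then show "\<bar>u (vector [t, s]) $ 2 - u (vector [t, s']) $ 2\<bar> \<le> e"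
      using osc box dist_vector2_le[of t s t s'] by simp
  qed (use bound box in auto)
  moreover have "integral {c..d} (\<lambda>t. u (vector [a, t]) $ 1 - u (vector [b, t]) $ 1)
      = - integral {c..d} (\<lambda>y. u (vector [b, y]) $ 1 - u (vector [a, y]) $ 1)"
    "integral {a..b} (\<lambda>t. u (vector [t, c]) $ 2 - u (vector [t, d]) $ 2)
      = - integral {a..b} (\<lambda>x. u (vector [x, d]) $ 2 - u (vector [x, c]) $ 2)"
    by (simp_all flip: integral_neg)
  ultimately show ?thesis
    using weakly_div_free_cutoff_identity[OF u \<epsilon>] by (simp only: abs_le_iff) (simp add: algebra_simps)
qed

theorem flux_rectangle_eq_0:
  fixes u :: "real^2 \<Rightarrow> real^2"
  assumes u: "continuous_on UNIV u" "weakly_div_free u" and "a < b" "c < d"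
  shows "integral {c..d} (\<lambda>y. u (vector [b, y]) $ 1 - u (vector [a, y]) $ 1)
       + integral {a..b} (\<lambda>x. u (vector [x, d]) $ 2 - u (vector [x, c]) $ 2) = 0"
    (is "?\<Phi> = 0")
proof -
  define K where "K = cbox (vector [a, c]) (vector [b, d] :: real^2)"
  have "bounded (u ` K)"
    unfolding K_def by (intro compact_imp_bounded compact_continuous_image continuous_on_subset[OF u(1)]) auto
  then obtain M where M: "M > 0" "\<And>z. z \<in> K \<Longrightarrow> norm (u z) \<le> M"
    unfolding bounded_pos by auto
  have uc: "uniformly_continuous_on K u"
    unfolding K_def by (intro compact_uniformly_continuous continuous_on_subset[OF u(1)]) auto
  have "\<bar>?\<Phi>\<bar> \<le> 0 + \<eta>" if "\<eta> > 0" for \<eta>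
  proof -
    define e where "e = \<eta> / (4 * ((b - a) + (d - c)))"
    have e: "e > 0" "2 * e * ((b - a) + (d - c)) = \<eta> / 2"
      using \<open>\<eta> > 0\<close> \<open>a < b\<close> \<open>c < d\<close> by (simp_all add: e_def field_simps)
    obtain \<delta> where \<delta>: "\<delta> > 0" "\<And>z z'. z \<in> K \<Longrightarrow> z' \<in> K \<Longrightarrow> dist z' z < \<delta> \<Longrightarrow> dist (u z') (u z) < e"
      using uc e(1) unfolding uniformly_continuous_on_def by blast
    define \<epsilon> where "\<epsilon> = min (\<delta> / 2) (min ((b - a) / 2) (min ((d - c) / 2) (\<eta> / (16 * M))))"
    have \<epsilon>_le: "\<epsilon> \<le> \<delta> / 2" "\<epsilon> \<le> (b - a) / 2" "\<epsilon> \<le> (d - c) / 2" "\<epsilon> \<le> \<eta> / (16 * M)"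
      unfolding \<epsilon>_def by (meson min.cobounded1 min.cobounded2 order.trans)+
    have "8 * \<epsilon> * M \<le> (8 * M) * (\<eta> / (16 * M))"
      using mult_left_mono[OF \<epsilon>_le(4), of "8 * M"] M(1) by (simp add: ac_simps)
    also have "\<dots> = \<eta> / 2"
      using M(1) by simp
    finally have "8 * \<epsilon> * M \<le> \<eta> / 2" .
    moreover have "\<epsilon> > 0"
      using \<delta>(1) M(1) \<open>\<eta> > 0\<close> \<open>a < b\<close> \<open>c < d\<close> by (simp add: \<epsilon>_def)
    moreover have "a + 2 * \<epsilon> \<le> b" "c + 2 * \<epsilon> \<le> d" "\<epsilon> < \<delta>"
      using \<epsilon>_le(1-3) \<delta>(1) by auto
    ultimately have \<epsilon>: "\<epsilon> > 0" "a + 2 * \<epsilon> \<le> b" "c + 2 * \<epsilon> \<le> d" "\<epsilon> < \<delta>" "8 * \<epsilon> * M \<le> \<eta> / 2"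
      by blast+
    have "\<bar>?\<Phi>\<bar> \<le> 2 * e * ((b - a) + (d - c)) + 8 * \<epsilon> * M"
    proof (rule flux_rectangle_bound[OF u \<epsilon>(1-3)])
      fix z z' :: "real^2" and i
      assume z: "z \<in> cbox (vector [a, c]) (vector [b, d])" "z' \<in> cbox (vector [a, c]) (vector [b, d])"
      then show "\<bar>u z $ i\<bar> \<le> M"
        using M(2)[of z] component_le_norm_cart[of "u z" i] by (simp add: K_def)
      assume "dist z z' \<le> \<epsilon>"
      then have "dist (u z) (u z') < e"
        using \<delta>(2)[of z' z] z \<epsilon>(4) by (simp add: K_def)
      then show "\<bar>u z $ i - u z' $ i\<bar> \<le> e"
        using component_le_norm_cart[of "u z - u z'" i] by (simp add: dist_norm)
    qed
    with e \<epsilon>(5) show ?thesis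
      by simp
  qed
  then show ?thesis
    using field_le_epsilon[of "\<bar>?\<Phi>\<bar>" 0] by simp
qed

section \<open>The stream function\<close>

definition signed_integral :: "real \<Rightarrow> real \<Rightarrow> (real \<Rightarrow> real) \<Rightarrow> real" where
  "signed_integral a b f = (if a \<le> b then integral {a..b} f else - integral {b..a} f)"

lemma signed_integral_same [simp]: "signed_integral a a f = 0"
  by (simp add: signed_integral_def)

lemma signed_integral_swap: "signed_integral b a f = - signed_integral a b f"
  by (cases "a = b") (auto simp: signed_integral_def)

lemma signed_integral_neg: "signed_integral a b (\<lambda>t. - f t) = - signed_integral a b f"
  by (simp add: signed_integral_def integral_neg)

lemma signed_integral_cmult: "signed_integral a b (\<lambda>t. c * f t) = c * signed_integral a b f"
  by (simp add: signed_integral_def)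

lemma signed_integral_diff:
  assumes "continuous_on UNIV f" "continuous_on UNIV g"
  shows "signed_integral a b (\<lambda>t. f t - g t) = signed_integral a b f - signed_integral a b g"
proof -
  have "f integrable_on {s..t}" "g integrable_on {s..t}" for s t
    by (intro integrable_continuous_real continuous_on_subset[OF assms(1)] continuous_on_subset[OF assms(2)];
        simp)+
  then show ?thesis
    by (simp add: signed_integral_def integral_diff)
qed

lemma signed_integral_add:
  assumes "continuous_on UNIV f"
  shows "signed_integral a b f + signed_integral b c f = signed_integral a c f"
proof -
  have "f integrable_on {s..t}" for s t
    by (intro integrable_continuous_real continuous_on_subset[OF assms]) auto
  then have combine: "integral {s..m} f + integral {m..t} f = integral {s..t} f" if "s \<le> m" "m \<le> t" for s m t
    using Henstock_Kurzweil_Integration.integral_combine[OF that] by blast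
  consider "a \<le> b" "b \<le> c" | "a \<le> c" "c \<le> b" | "b \<le> a" "a \<le> c" | "b \<le> c" "c \<le> a"
    | "c \<le> a" "a \<le> b" | "c \<le> b" "b \<le> a"
    by linarith
  then show ?thesis
  proof cases
    case 1 then show ?thesis using combine[of a b c] by (simp add: signed_integral_def)
  next
    case 2 then show ?thesis using combine[of a c b] by (cases "b = c") (auto simp: signed_integral_def)
  next
    case 3 then show ?thesis using combine[of b a c] by (cases "a = b") (auto simp: signed_integral_def)
  next
    case 4 then show ?thesis using combine[of b c a]
      by (cases "a = c"; cases "b = c") (auto simp: signed_integral_def)
  next
    case 5 then show ?thesis using combine[of c a b]
      by (cases "a = c"; cases "a = b") (auto simp: signed_integral_def)
  next
    case 6 then show ?thesis using combine[of c b a]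
      by (cases "a = b"; cases "b = c") (auto simp: signed_integral_def)
  qed
qed

lemma signed_integral_approx:
  assumes "continuous_on UNIV f"
    and "\<And>t. min a b \<le> t \<Longrightarrow> t \<le> max a b \<Longrightarrow> \<bar>f t - f0\<bar> \<le> e"
  shows "\<bar>signed_integral a b f - f0 * (b - a)\<bar> \<le> e * \<bar>b - a\<bar>"
proof -
  have approx: "\<bar>integral {s..t} f - f0 * (t - s)\<bar> \<le> e * (t - s)"
    if "s \<le> t" "\<And>x. s \<le> x \<Longrightarrow> x \<le> t \<Longrightarrow> \<bar>f x - f0\<bar> \<le> e" for s t
  proof -
    have "f integrable_on {s..t}"
      by (intro integrable_continuous_real continuous_on_subset[OF assms(1)]) auto
    from integral_diff[OF this integrable_const_ivl[of f0 s t]] that(1)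
    have "integral {s..t} f - f0 * (t - s) = integral {s..t} (\<lambda>x. f x - f0)"
      by (simp add: algebra_simps)
    also have "norm \<dots> \<le> e * (t - s)"
      using that by (intro integral_bound continuous_intros continuous_on_subset[OF assms(1)]) auto
    finally show ?thesis by simp
  qed
  show ?thesis
  proof (cases "a \<le> b")
    case True
    then show ?thesis using approx[of a b] assms(2) by (simp add: signed_integral_def)
  next
    case False
    then have "\<bar>integral {b..a} f - f0 * (a - b)\<bar> \<le> e * (a - b)"
      using approx[of b a] assms(2) by simp
    moreover have "- integral {b..a} f - f0 * (b - a) = - (integral {b..a} f - f0 * (a - b))"
      by (simp add: algebra_simps)
    ultimately show ?thesis
      using False by (simp add: signed_integral_def)
  qed
qed

lemma signed_integral_lower_bound:
  assumes "continuous_on UNIV f" "a \<le> b" "\<And>t. a \<le> t \<Longrightarrow> t \<le> b \<Longrightarrow> f t \<ge> c"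
  shows "signed_integral a b f \<ge> c * (b - a)"
proof -
  have "integral {a..b} (\<lambda>_. c) \<le> integral {a..b} f"
    using assms by (intro integral_le integrable_continuous_real continuous_on_subset[OF assms(1)]) auto
  then show ?thesis
    using assms(2) by (simp add: signed_integral_def mult.commute)
qed

lemma dist_Pair_le_abs: "dist (a, b) (c, d) \<le> \<bar>a - c\<bar> + \<bar>b - d\<bar>" for a b c d :: real
  using sqrt_sum_squares_le_sum_abs[of "a - c" "b - d"] by (simp add: dist_Pair_Pair dist_real_def)

locale planar_flux_free =
  fixes p q :: "real \<Rightarrow> real \<Rightarrow> real"
  assumes continuous_p: "continuous_on UNIV (\<lambda>z. p (fst z) (snd z))"
    and continuous_q: "continuous_on UNIV (\<lambda>z. q (fst z) (snd z))"
    and flux_free: "\<And>a b c d. a < b \<Longrightarrow> c < d \<Longrightarrow>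
      integral {c..d} (\<lambda>y. p b y - p a y) + integral {a..b} (\<lambda>x. q x d - q x c) = 0"
begin

lemma continuous_on_p: "continuous_on S (p x)"
  by (rule continuous_on_curry1[OF continuous_p])

lemma continuous_on_q: "continuous_on S (\<lambda>x. q x y)"
  by (rule continuous_on_curry2[OF continuous_q])

lemma signed_flux_eq_0:
  "signed_integral c d (\<lambda>y. p b y - p a y) + signed_integral a b (\<lambda>x. q x d - q x c) = 0"
proof -
  define E where "E a b c d = signed_integral c d (\<lambda>y. p b y - p a y) + signed_integral a b (\<lambda>x. q x d - q x c)"
    for a b c d
  have swap_ab: "E a b c d = - E b a c d" and swap_cd: "E a b c d = - E a b d c" for a b c d
    using signed_integral_neg[of c d "\<lambda>y. p a y - p b y"] signed_integral_neg[of a b "\<lambda>x. q x c - q x d"]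
    by (simp_all add: E_def signed_integral_swap[of a b] signed_integral_swap[of c d])
  have "E a b c d = 0" if "a < b" "c < d" for a b c d
    using flux_free[OF that] that by (simp add: E_def signed_integral_def)
  then have "E a b c d = 0" if "a < b" for a b c d
    using that swap_cd[of a b c d] by (cases c d rule: linorder_cases) (auto simp: E_def)
  then have "E a b c d = 0"
    using swap_ab[of a b c d] by (cases a b rule: linorder_cases) (auto simp: E_def)
  then show ?thesis
    by (simp add: E_def)
qed

text \<open>\<open>\<partial>\<psi>/\<partial>y = p\<close> and \<open>\<partial>\<psi>/\<partial>x = -q\<close>, so \<open>\<psi>\<close> is a first integral of the flow of \<open>(p, q)\<close>;
  flux-freeness makes it independent of the path of integration.\<close>
definition stream_function :: "real \<Rightarrow> real \<Rightarrow> real \<Rightarrow> real \<Rightarrow> real" where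
  "stream_function x0 y0 x y = signed_integral y0 y (p x) - signed_integral x0 x (\<lambda>s. q s y0)"

lemma stream_function_diff:
  "stream_function x0 y0 x' y' - stream_function x0 y0 x y
     = signed_integral y y' (p x') - signed_integral x x' (\<lambda>s. q s y)"
proof -
  have "signed_integral y0 y (\<lambda>t. p x' t - p x t) + signed_integral x x' (\<lambda>s. q s y - q s y0) = 0"
    by (rule signed_flux_eq_0)
  then show ?thesis
    unfolding stream_function_def
    using signed_integral_add[OF continuous_on_p[of UNIV x'], of y0 y y']
      signed_integral_add[OF continuous_on_q[of UNIV y0], of x0 x x']
      signed_integral_diff[OF continuous_on_p continuous_on_p, of y0 y x' x]
      signed_integral_diff[OF continuous_on_q continuous_on_q, of x x' y y0]
    by linarith
qed

lemma stream_function_has_derivative: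
  "((\<lambda>z. stream_function x0 y0 (fst z) (snd z)) has_derivative (\<lambda>v. p x y * snd v - q x y * fst v)) (at (x, y))"
  unfolding has_derivative_at_alt
proof (intro conjI allI impI)
  show "bounded_linear (\<lambda>v::real \<times> real. p x y * snd v - q x y * fst v)"
    by (intro bounded_linear_intros)
  fix e :: real assume "e > 0"
  have "isCont (\<lambda>z. p (fst z) (snd z)) (x, y)" "isCont (\<lambda>z. q (fst z) (snd z)) (x, y)"
    using continuous_p continuous_q by (simp_all add: continuous_on_eq_continuous_at)
  then obtain d1 d2 where "d1 > 0" "\<And>z. dist z (x, y) < d1 \<Longrightarrow> dist (p (fst z) (snd z)) (p x y) < e / 2"
    and "d2 > 0" "\<And>z. dist z (x, y) < d2 \<Longrightarrow> dist (q (fst z) (snd z)) (q x y) < e / 2"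
    unfolding continuous_at_eps_delta using \<open>e > 0\<close> by (metis fst_conv half_gt_zero snd_conv)
  then obtain d where d: "d > 0"
    "\<And>z. dist z (x, y) < d \<Longrightarrow> dist (p (fst z) (snd z)) (p x y) < e / 2 \<and> dist (q (fst z) (snd z)) (q x y) < e / 2"
    by (intro that[of "min d1 d2"]) auto
  show "\<exists>d>0. \<forall>v. norm (v - (x, y)) < d \<longrightarrow>
      norm (stream_function x0 y0 (fst v) (snd v) - stream_function x0 y0 (fst (x, y)) (snd (x, y))
        - (p x y * snd (v - (x, y)) - q x y * fst (v - (x, y)))) \<le> e * norm (v - (x, y))"
  proof (intro exI[of _ "d / 2"] conjI allI impI)
    fix v :: "real \<times> real"
    assume v: "norm (v - (x, y)) < d / 2"
    obtain x' y' where v_eq: "v = (x', y')" by fastforce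
    have dx: "\<bar>x' - x\<bar> \<le> norm (v - (x, y))" and dy: "\<bar>y' - y\<bar> \<le> norm (v - (x, y))"
      using norm_fst_le[where x="x' - x" and y="y' - y"] norm_snd_le[where x="x' - x" and y="y' - y"] v_eq by auto
    have "\<bar>signed_integral y y' (p x') - p x y * (y' - y)\<bar> \<le> e / 2 * \<bar>y' - y\<bar>"
    proof (rule signed_integral_approx[OF continuous_on_p])
      fix t assume "min y y' \<le> t" "t \<le> max y y'"
      with dx dy v have "dist (x', t) (x, y) < d"
        using dist_Pair_le_abs[of x' t x y] by (auto simp: abs_le_iff)
      then show "\<bar>p x' t - p x y\<bar> \<le> e / 2" using d(2)[of "(x', t)"] by (simp add: dist_real_def)
    qed
    moreover have "\<bar>signed_integral x x' (\<lambda>s. q s y) - q x y * (x' - x)\<bar> \<le> e / 2 * \<bar>x' - x\<bar>"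
    proof (rule signed_integral_approx[OF continuous_on_q])
      fix s assume "min x x' \<le> s" "s \<le> max x x'"
      with dx v have "dist (s, y) (x, y) < d"
        using dist_Pair_le_abs[of s y x y] by (auto simp: abs_le_iff)
      then show "\<bar>q s y - q x y\<bar> \<le> e / 2" using d(2)[of "(s, y)"] by (simp add: dist_real_def)
    qed
    moreover have "e / 2 * \<bar>y' - y\<bar> + e / 2 * \<bar>x' - x\<bar> \<le> e / 2 * norm (v - (x, y)) + e / 2 * norm (v - (x, y))"
      using dx dy \<open>e > 0\<close> by (intro add_mono mult_left_mono) auto
    then have "e / 2 * \<bar>y' - y\<bar> + e / 2 * \<bar>x' - x\<bar> \<le> e * norm (v - (x, y))"
      by simp
    ultimately show "norm (stream_function x0 y0 (fst v) (snd v) - stream_function x0 y0 (fst (x, y)) (snd (x, y))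
        - (p x y * snd (v - (x, y)) - q x y * fst (v - (x, y)))) \<le> e * norm (v - (x, y))"
      using stream_function_diff[of x0 y0 x' y' x y] v_eq by (simp only: abs_le_iff) (simp, linarith)
  qed (use d in simp)
qed

lemma continuous_on_stream_function: "continuous_on S (\<lambda>z. stream_function x0 y0 (fst z) (snd z))"
proof -
  have "isCont (\<lambda>z. stream_function x0 y0 (fst z) (snd z)) (x, y)" for x y
    using stream_function_has_derivative by (rule has_derivative_continuous)
  then show ?thesis
    by (simp add: continuous_at_imp_continuous_on split_paired_all)
qed

lemma stream_function_constant_on_solution:
  assumes "convex T" "t0 \<in> T" "t \<in> T"
    and "\<And>t. t \<in> T \<Longrightarrow> (x has_real_derivative p (x t) (y t)) (at t within T)"
    and "\<And>t. t \<in> T \<Longrightarrow> (y has_real_derivative q (x t) (y t)) (at t within T)"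
  shows "stream_function x0 y0 (x t) (y t) = stream_function x0 y0 (x t0) (y t0)"
proof -
  have "((\<lambda>t. stream_function x0 y0 (x t) (y t)) has_derivative (\<lambda>h. 0)) (at t within T)" if "t \<in> T" for t
    using has_derivative_compose[OF has_derivative_Pair[OF assms(4,5)[OF that, unfolded has_field_derivative_def]]
        stream_function_has_derivative]
    by (simp add: algebra_simps)
  from has_derivative_zero_constant[OF assms(1) this] assms(2,3) show ?thesis
    by metis
qed

end

section \<open>Local uniqueness\<close>

lemma eventually_near_at_within:
  assumes "(f has_real_derivative f') (at t0 within J)" "e > 0"
  shows "\<forall>\<^sub>F t in at t0 within J. \<bar>f t - f t0\<bar> < e"
proof -
  have "(f \<longlongrightarrow> f t0) (at t0 within J)"
    using DERIV_continuous[OF assms(1)] by (simp add: continuous_within)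
  from tendstoD[OF this assms(2)] show ?thesis
    by (simp add: dist_real_def)
qed

lemma bounded_on_square:
  fixes f :: "real \<Rightarrow> real \<Rightarrow> real"
  assumes "continuous_on UNIV (\<lambda>z. f (fst z) (snd z))"
  obtains B where "B > 0" "\<And>x y. \<bar>x - x0\<bar> \<le> r \<Longrightarrow> \<bar>y - y0\<bar> \<le> r \<Longrightarrow> \<bar>f x y\<bar> \<le> B"
proof -
  have "bounded ((\<lambda>z. f (fst z) (snd z)) ` cbox (x0 - r, y0 - r) (x0 + r, y0 + r))"
    by (intro compact_imp_bounded compact_continuous_image continuous_on_subset[OF assms]) auto
  with that show ?thesis
    unfolding bounded_pos by (force simp: cbox_Pair_eq abs_le_iff)
qed

lemma sign_persistence_square:
  fixes f :: "real \<Rightarrow> real \<Rightarrow> real"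
  assumes "continuous_on UNIV (\<lambda>z. f (fst z) (snd z))" "f x0 y0 \<noteq> 0"
  obtains r where "r > 0"
    "\<And>x y. \<bar>x - x0\<bar> \<le> r \<Longrightarrow> \<bar>y - y0\<bar> \<le> r \<Longrightarrow> \<bar>f x0 y0\<bar> / 2 \<le> sgn (f x0 y0) * f x y"
proof -
  define c where "c = \<bar>f x0 y0\<bar> / 2"
  have "c > 0" "sgn (f x0 y0) * f x0 y0 = 2 * c" "\<bar>sgn (f x0 y0)\<bar> = 1"
    using assms(2) by (auto simp: c_def abs_sgn_eq sgn_if)
  have "isCont (\<lambda>z. f (fst z) (snd z)) (x0, y0)"
    using assms(1) by (simp add: continuous_on_eq_continuous_at)
  then obtain r0 where "r0 > 0" and r0: "\<And>z. dist z (x0, y0) < r0 \<Longrightarrow> dist (f (fst z) (snd z)) (f x0 y0) < c"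
    unfolding continuous_at_eps_delta using \<open>c > 0\<close> by (metis fst_conv snd_conv)
  have "c \<le> sgn (f x0 y0) * f x y" if "\<bar>x - x0\<bar> \<le> r0 / 3" "\<bar>y - y0\<bar> \<le> r0 / 3" for x y
  proof -
    have "dist (x, y) (x0, y0) < r0"
      using dist_Pair_le_abs[of x y x0 y0] that \<open>r0 > 0\<close> by simp
    then have "\<bar>sgn (f x0 y0) * f x y - sgn (f x0 y0) * f x0 y0\<bar> < c"
      using r0[of "(x, y)"] \<open>\<bar>sgn (f x0 y0)\<bar> = 1\<close>
      by (simp add: dist_real_def abs_mult flip: right_diff_distrib)
    with \<open>sgn (f x0 y0) * f x0 y0 = 2 * c\<close> show ?thesis by linarith
  qed
  with that[of "r0 / 3"] \<open>r0 > 0\<close> show ?thesis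
    by (simp add: c_def)
qed

lemma implicit_level_curve:
  fixes \<psi> :: "real \<Rightarrow> real \<Rightarrow> real"
  assumes "\<psi> x0 y0 = 0" "c > 0" "r > 0" "B > 0"
    and cont: "\<And>x. \<bar>x - x0\<bar> \<le> r \<Longrightarrow> continuous_on {y0 - r..y0 + r} (\<psi> x)"
    and mono: "\<And>x y y'. \<bar>x - x0\<bar> \<le> r \<Longrightarrow> \<bar>y - y0\<bar> \<le> r \<Longrightarrow> \<bar>y' - y0\<bar> \<le> r \<Longrightarrow> y \<le> y' \<Longrightarrow>
      c * (y' - y) \<le> \<psi> x y' - \<psi> x y"
    and lipschitz: "\<And>x x' y. \<bar>x - x0\<bar> \<le> r \<Longrightarrow> \<bar>x' - x0\<bar> \<le> r \<Longrightarrow> \<bar>y - y0\<bar> \<le> r \<Longrightarrow>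
      \<bar>\<psi> x' y - \<psi> x y\<bar> \<le> B * \<bar>x' - x\<bar>"
  obtains \<rho> \<gamma> where "\<rho> > 0" "\<rho> \<le> r" "continuous_on {x0 - \<rho>..x0 + \<rho>} \<gamma>"
    and "\<And>s. \<bar>s - x0\<bar> \<le> \<rho> \<Longrightarrow> \<bar>\<gamma> s - y0\<bar> \<le> r \<and> \<psi> s (\<gamma> s) = 0"
    and "\<And>s y. \<bar>s - x0\<bar> \<le> \<rho> \<Longrightarrow> \<bar>y - y0\<bar> \<le> r \<Longrightarrow> \<psi> s y = 0 \<Longrightarrow> y = \<gamma> s"
proof -
  define \<rho> where "\<rho> = min r (c * r / (2 * B))"
  have \<rho>: "\<rho> > 0" "\<rho> \<le> r" "B * \<rho> \<le> c * r / 2"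
    using assms(2-4) mult_left_mono[of \<rho> "c * r / (2 * B)" B] by (auto simp: \<rho>_def)
  have sep: "c * \<bar>y' - y\<bar> \<le> \<bar>\<psi> x y' - \<psi> x y\<bar>"
    if "\<bar>x - x0\<bar> \<le> r" "\<bar>y - y0\<bar> \<le> r" "\<bar>y' - y0\<bar> \<le> r" for x y y'
    using mono[OF that] mono[OF that(1,3,2)] by (cases "y \<le> y'") (auto simp: abs_if)
  have unique: "y = y'" if "\<bar>x - x0\<bar> \<le> r" "\<bar>y - y0\<bar> \<le> r" "\<bar>y' - y0\<bar> \<le> r" "\<psi> x y = \<psi> x y'" for x y y'
    using sep[OF that(1-3)] that(4) \<open>c > 0\<close> by (simp add: mult_le_0_iff)
  have exists: "\<exists>y. \<bar>y - y0\<bar> \<le> r \<and> \<psi> s y = 0" if s: "\<bar>s - x0\<bar> \<le> \<rho>" for s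
  proof -
    have s': "\<bar>s - x0\<bar> \<le> r" using s \<rho> by linarith
    have "B * \<bar>s - x0\<bar> \<le> c * r / 2"
      using mult_left_mono[OF s, of B] \<rho>(3) \<open>B > 0\<close> by linarith
    moreover have "c * r \<le> \<psi> x0 (y0 + r)" "c * r \<le> - \<psi> x0 (y0 - r)"
      using mono[of x0 y0 "y0 + r"] mono[of x0 "y0 - r" y0] \<open>\<psi> x0 y0 = 0\<close> \<open>r > 0\<close> by auto
    moreover have "\<bar>\<psi> s (y0 + r) - \<psi> x0 (y0 + r)\<bar> \<le> B * \<bar>s - x0\<bar>"
      "\<bar>\<psi> s (y0 - r) - \<psi> x0 (y0 - r)\<bar> \<le> B * \<bar>s - x0\<bar>"
      using lipschitz[of x0 s] s' \<open>r > 0\<close> by auto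
    ultimately have "\<psi> s (y0 - r) \<le> 0" "0 \<le> \<psi> s (y0 + r)"
      using \<open>c > 0\<close> \<open>r > 0\<close> by (auto simp: abs_le_iff)
    with IVT'[of "\<psi> s" "y0 - r" 0 "y0 + r", OF _ _ _ cont[OF s']] \<open>r > 0\<close>
    obtain y where "y0 - r \<le> y" "y \<le> y0 + r" "\<psi> s y = 0"
      by auto
    then show ?thesis
      by (intro exI[of _ y]) (auto simp: abs_le_iff)
  qed
  define \<gamma> where "\<gamma> s = (THE y. \<bar>y - y0\<bar> \<le> r \<and> \<psi> s y = 0)" for s
  have \<gamma>: "\<bar>\<gamma> s - y0\<bar> \<le> r \<and> \<psi> s (\<gamma> s) = 0" if s: "\<bar>s - x0\<bar> \<le> \<rho>" for s
    unfolding \<gamma>_def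
  proof (rule theI')
    show "\<exists>!y. \<bar>y - y0\<bar> \<le> r \<and> \<psi> s y = 0"
      using exists[OF s] unique[of s] s \<rho>(2) by (metis order_trans)
  qed
  have \<gamma>_unique: "y = \<gamma> s" if "\<bar>s - x0\<bar> \<le> \<rho>" "\<bar>y - y0\<bar> \<le> r" "\<psi> s y = 0" for s y
    using unique[of s y "\<gamma> s"] \<gamma>[OF that(1)] that \<rho>(2) by auto
  have "continuous_on {x0 - \<rho>..x0 + \<rho>} \<gamma>"
  proof (rule lipschitz_on_continuous_on[of "B / c"], rule lipschitz_onI)
    fix s s' assume "s \<in> {x0 - \<rho>..x0 + \<rho>}" "s' \<in> {x0 - \<rho>..x0 + \<rho>}"
    then have s: "\<bar>s - x0\<bar> \<le> \<rho>" "\<bar>s' - x0\<bar> \<le> \<rho>" by (auto simp: abs_le_iff)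
    then have s': "\<bar>s - x0\<bar> \<le> r" "\<bar>s' - x0\<bar> \<le> r" using \<rho>(2) by linarith+
    have "c * \<bar>\<gamma> s - \<gamma> s'\<bar> \<le> \<bar>\<psi> s (\<gamma> s) - \<psi> s (\<gamma> s')\<bar>"
      using sep[of s "\<gamma> s'" "\<gamma> s"] \<gamma>[OF s(1)] \<gamma>[OF s(2)] s' by simp
    also have "\<dots> = \<bar>\<psi> s (\<gamma> s') - \<psi> s' (\<gamma> s')\<bar>"
      using \<gamma>[OF s(1)] \<gamma>[OF s(2)] by simp
    also have "\<dots> \<le> B * \<bar>s - s'\<bar>"
      using lipschitz[of s' s "\<gamma> s'"] s' \<gamma>[OF s(2)] by simp
    finally show "dist (\<gamma> s) (\<gamma> s') \<le> B / c * dist s s'"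
      using \<open>c > 0\<close> by (simp add: dist_real_def field_simps)
  qed (use assms(2,4) in simp)
  with \<rho> \<gamma> \<gamma>_unique show ?thesis
    using that by blast
qed

lemma inj_on_nonzero_derivative:
  fixes f :: "real \<Rightarrow> real"
  assumes f: "\<And>s. s \<in> {a..b} \<Longrightarrow> (f has_real_derivative f' s) (at s within {a..b})"
    and nonzero: "\<And>s. s \<in> {a..b} \<Longrightarrow> f' s \<noteq> 0"
  shows "inj_on f {a..b}"
proof -
  have strict: "f l \<noteq> f h" if lh: "l \<in> {a..b}" "h \<in> {a..b}" "l < h" for l h
  proof
    assume "f l = f h"
    have sub: "{l..h} \<subseteq> {a..b}" using lh by auto
    have "\<exists>z. l < z \<and> z < h \<and> (\<lambda>v. f' z * v) = (\<lambda>v. 0)"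
    proof (rule Rolle_deriv[OF \<open>l < h\<close> \<open>f l = f h\<close>])
      show "continuous_on {l..h} f"
        using f DERIV_continuous continuous_on_subset[OF _ sub]
        unfolding continuous_on_eq_continuous_within by blast
      fix z assume "l < z" "z < h"
      with lh have "at z within {a..b} = at z" "z \<in> {a..b}"
        by (auto intro: at_within_Icc_at)
      with f[of z] show "(f has_derivative (\<lambda>v. f' z * v)) (at z)"
        by (simp add: has_field_derivative_def)
    qed
    then obtain z where z: "l < z" "z < h" "(\<lambda>v. f' z * v) = (\<lambda>v. 0)"
      by blast
    with sub nonzero[of z] fun_cong[OF z(3), of 1] show False
      by auto
  qed
  show ?thesis
  proof (rule inj_onI)
    fix s s' assume "s \<in> {a..b}" "s' \<in> {a..b}" "f s = f s'"
    with strict[of s s'] strict[of s' s] show "s = s'"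
      by (cases s s' rule: linorder_cases) auto
  qed
qed

text \<open>Uniqueness for \<open>x' = g x\<close> with \<open>g\<close> continuous but nowhere zero: the time needed to travel
  from \<open>a\<close> to \<open>s\<close> is \<open>\<integral>\<^sub>a\<^sup>s 1/g\<close>, a strictly monotone function of \<open>s\<close>.\<close>
lemma autonomous_ode_nonvanishing_unique:
  fixes g :: "real \<Rightarrow> real" and x1 x2 :: "real \<Rightarrow> real"
  assumes g: "continuous_on {a..b} g" "\<And>s. s \<in> {a..b} \<Longrightarrow> g s \<noteq> 0"
    and T: "convex T" "t0 \<in> T" "t \<in> T"
    and range: "\<And>t. t \<in> T \<Longrightarrow> x1 t \<in> {a..b}" "\<And>t. t \<in> T \<Longrightarrow> x2 t \<in> {a..b}"
    and ode: "\<And>t. t \<in> T \<Longrightarrow> (x1 has_real_derivative g (x1 t)) (at t within T)"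
      "\<And>t. t \<in> T \<Longrightarrow> (x2 has_real_derivative g (x2 t)) (at t within T)"
    and "x1 t0 = x2 t0"
  shows "x1 t = x2 t"
proof -
  define \<Phi> where "\<Phi> s = integral {a..s} (\<lambda>s. 1 / g s)" for s
  have inv_g: "continuous_on {a..b} (\<lambda>s. 1 / g s)"
    using g by (intro continuous_intros) auto
  have \<Phi>: "(\<Phi> has_real_derivative 1 / g s) (at s within {a..b})" if "s \<in> {a..b}" for s
    unfolding \<Phi>_def by (rule integral_has_real_derivative[OF inv_g that])
  have travel_time: "\<Phi> (x t) - t = \<Phi> (x t0) - t0"
    if range: "\<And>t. t \<in> T \<Longrightarrow> x t \<in> {a..b}"
      and ode: "\<And>t. t \<in> T \<Longrightarrow> (x has_real_derivative g (x t)) (at t within T)" for x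
  proof -
    have "((\<lambda>t. \<Phi> (x t) - t) has_real_derivative 0) (at t within T)" if "t \<in> T" for t
    proof -
      have "(\<Phi> has_real_derivative 1 / g (x t)) (at (x t) within x ` T)"
        using DERIV_subset[OF \<Phi>[OF range[OF that]]] range by blast
      from DERIV_image_chain[OF this ode[OF that]] g(2)[OF range[OF that]]
      have "((\<lambda>t. \<Phi> (x t)) has_real_derivative 1) (at t within T)"
        by (simp add: o_def)
      from DERIV_diff[OF this DERIV_ident] show ?thesis
        by simp
    qed
    then obtain C where "\<forall>t\<in>T. \<Phi> (x t) - t = C"
      using has_field_derivative_zero_constant[OF T(1)] by blast
    with T(2,3) show ?thesis
      by simp
  qed
  have "\<Phi> (x1 t) = \<Phi> (x2 t)"
    using travel_time[OF range(1) ode(1)] travel_time[OF range(2) ode(2)] \<open>x1 t0 = x2 t0\<close> by simp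
  moreover have "inj_on \<Phi> {a..b}"
    using g(2) by (intro inj_on_nonzero_derivative[OF \<Phi>]) auto
  ultimately show ?thesis
    using range T(3) by (auto dest: inj_onD)
qed

context planar_flux_free
begin

lemma stream_function_level_curve:
  assumes "p x0 y0 \<noteq> 0"
  obtains \<rho> r \<gamma> where "\<rho> > 0" "r > 0" "continuous_on {x0 - \<rho>..x0 + \<rho>} \<gamma>"
    and "\<And>s. \<bar>s - x0\<bar> \<le> \<rho> \<Longrightarrow> \<bar>\<gamma> s - y0\<bar> \<le> r \<and> p s (\<gamma> s) \<noteq> 0"
    and "\<And>s y. \<bar>s - x0\<bar> \<le> \<rho> \<Longrightarrow> \<bar>y - y0\<bar> \<le> r \<Longrightarrow> stream_function x0 y0 s y = 0 \<longleftrightarrow> y = \<gamma> s"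
proof -
  define \<sigma> where "\<sigma> = sgn (p x0 y0)"
  define c where "c = \<bar>p x0 y0\<bar> / 2"
  define \<psi> where "\<psi> x y = \<sigma> * stream_function x0 y0 x y" for x y
  have \<sigma>: "\<bar>\<sigma>\<bar> = 1" and "c > 0"
    using assms by (auto simp: \<sigma>_def c_def abs_sgn_eq)
  obtain r where "r > 0" and p_lower: "\<And>x y. \<bar>x - x0\<bar> \<le> r \<Longrightarrow> \<bar>y - y0\<bar> \<le> r \<Longrightarrow> c \<le> \<sigma> * p x y"
    using sign_persistence_square[OF continuous_p assms] unfolding \<sigma>_def c_def by blast
  obtain B where "B > 0" and B: "\<And>x y. \<bar>x - x0\<bar> \<le> r \<Longrightarrow> \<bar>y - y0\<bar> \<le> r \<Longrightarrow> \<bar>q x y\<bar> \<le> B"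
    using bounded_on_square[OF continuous_q] by blast
  obtain \<rho> \<gamma> where "\<rho> > 0" "\<rho> \<le> r" "continuous_on {x0 - \<rho>..x0 + \<rho>} \<gamma>"
    and \<gamma>: "\<And>s. \<bar>s - x0\<bar> \<le> \<rho> \<Longrightarrow> \<bar>\<gamma> s - y0\<bar> \<le> r \<and> \<psi> s (\<gamma> s) = 0"
    and \<gamma>_unique: "\<And>s y. \<bar>s - x0\<bar> \<le> \<rho> \<Longrightarrow> \<bar>y - y0\<bar> \<le> r \<Longrightarrow> \<psi> s y = 0 \<Longrightarrow> y = \<gamma> s"
  proof (rule implicit_level_curve[of \<psi> x0 y0 c r B])
    show "\<psi> x0 y0 = 0"
      by (simp add: \<psi>_def stream_function_def)
    show "continuous_on {y0 - r..y0 + r} (\<psi> x)" for x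
      unfolding \<psi>_def
      by (intro continuous_intros
          continuous_on_compose2[OF continuous_on_stream_function, of _ "\<lambda>y. (x, y)", simplified])
        (auto intro: continuous_intros)
    show "c * (y' - y) \<le> \<psi> x y' - \<psi> x y"
      if "\<bar>x - x0\<bar> \<le> r" "\<bar>y - y0\<bar> \<le> r" "\<bar>y' - y0\<bar> \<le> r" "y \<le> y'" for x y y'
    proof -
      have "c * (y' - y) \<le> signed_integral y y' (\<lambda>t. \<sigma> * p x t)"
        using that by (intro signed_integral_lower_bound continuous_intros continuous_on_p p_lower) auto
      also have "\<dots> = \<psi> x y' - \<psi> x y"
        using stream_function_diff[of x0 y0 x y' x y] by (simp add: \<psi>_def signed_integral_cmult algebra_simps)
      finally show ?thesis .
    qed
    show "\<bar>\<psi> x' y - \<psi> x y\<bar> \<le> B * \<bar>x' - x\<bar>"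
      if "\<bar>x - x0\<bar> \<le> r" "\<bar>x' - x0\<bar> \<le> r" "\<bar>y - y0\<bar> \<le> r" for x x' y
    proof -
      have "\<bar>signed_integral x x' (\<lambda>s. q s y) - 0 * (x' - x)\<bar> \<le> B * \<bar>x' - x\<bar>"
      proof (intro signed_integral_approx continuous_on_q)
        fix s assume "min x x' \<le> s" "s \<le> max x x'"
        with that(1,2) have "\<bar>s - x0\<bar> \<le> r"
          by (auto simp: abs_le_iff)
        with B that(3) show "\<bar>q s y - 0\<bar> \<le> B"
          by simp
      qed
      then show ?thesis
        using stream_function_diff[of x0 y0 x' y x y] \<sigma>(1) by (simp add: \<psi>_def abs_mult flip: right_diff_distrib)
    qed
  qed (use \<open>c > 0\<close> \<open>r > 0\<close> \<open>B > 0\<close> in auto)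
  show ?thesis
  proof (rule that[OF \<open>\<rho> > 0\<close> \<open>r > 0\<close> \<open>continuous_on {x0 - \<rho>..x0 + \<rho>} \<gamma>\<close>])
    fix s assume s: "\<bar>s - x0\<bar> \<le> \<rho>"
    with \<gamma>[OF s] \<open>\<rho> \<le> r\<close> p_lower[of s "\<gamma> s"] \<open>c > 0\<close> show "\<bar>\<gamma> s - y0\<bar> \<le> r \<and> p s (\<gamma> s) \<noteq> 0"
      by auto
    fix y assume "\<bar>y - y0\<bar> \<le> r"
    with s \<gamma>[OF s] \<gamma>_unique[OF s] \<sigma>(1) show "stream_function x0 y0 s y = 0 \<longleftrightarrow> y = \<gamma> s"
      by (auto simp: \<psi>_def)
  qed
qed

lemma solutions_locally_unique:
  fixes x y \<xi> \<eta> :: "real \<Rightarrow> real"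
  assumes "p x0 y0 \<noteq> 0" and J: "is_interval J" "t0 \<in> J"
    and sol1: "\<And>t. t \<in> J \<Longrightarrow> (x has_real_derivative p (x t) (y t)) (at t within J)"
      "\<And>t. t \<in> J \<Longrightarrow> (y has_real_derivative q (x t) (y t)) (at t within J)"
    and sol2: "\<And>t. t \<in> J \<Longrightarrow> (\<xi> has_real_derivative p (\<xi> t) (\<eta> t)) (at t within J)"
      "\<And>t. t \<in> J \<Longrightarrow> (\<eta> has_real_derivative q (\<xi> t) (\<eta> t)) (at t within J)"
    and init: "x t0 = x0" "y t0 = y0" "\<xi> t0 = x0" "\<eta> t0 = y0"
  shows "\<exists>\<delta>>0. \<forall>t\<in>J. \<bar>t - t0\<bar> < \<delta> \<longrightarrow> x t = \<xi> t \<and> y t = \<eta> t"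
proof -
  obtain \<rho> r \<gamma> where "\<rho> > 0" "r > 0" and \<gamma>_cont: "continuous_on {x0 - \<rho>..x0 + \<rho>} \<gamma>"
    and \<gamma>: "\<And>s. \<bar>s - x0\<bar> \<le> \<rho> \<Longrightarrow> \<bar>\<gamma> s - y0\<bar> \<le> r \<and> p s (\<gamma> s) \<noteq> 0"
    and level: "\<And>s y. \<bar>s - x0\<bar> \<le> \<rho> \<Longrightarrow> \<bar>y - y0\<bar> \<le> r \<Longrightarrow> stream_function x0 y0 s y = 0 \<longleftrightarrow> y = \<gamma> s"
    using stream_function_level_curve[OF assms(1)] by blast
  have "\<forall>\<^sub>F t in at t0 within J. (\<bar>x t - x0\<bar> < \<rho> \<and> \<bar>y t - y0\<bar> < r) \<and> (\<bar>\<xi> t - x0\<bar> < \<rho> \<and> \<bar>\<eta> t - y0\<bar> < r)"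
    using eventually_conj[OF
        eventually_conj[OF eventually_near_at_within[OF sol1(1)[OF J(2)] \<open>\<rho> > 0\<close>]
          eventually_near_at_within[OF sol1(2)[OF J(2)] \<open>r > 0\<close>]]
        eventually_conj[OF eventually_near_at_within[OF sol2(1)[OF J(2)] \<open>\<rho> > 0\<close>]
          eventually_near_at_within[OF sol2(2)[OF J(2)] \<open>r > 0\<close>]]]
    unfolding init .
  then obtain \<delta> where "\<delta> > 0" and close: "\<forall>t\<in>J. t \<noteq> t0 \<and> dist t t0 < \<delta> \<longrightarrow>
      (\<bar>x t - x0\<bar> < \<rho> \<and> \<bar>y t - y0\<bar> < r) \<and> (\<bar>\<xi> t - x0\<bar> < \<rho> \<and> \<bar>\<eta> t - y0\<bar> < r)"
    unfolding eventually_at by blast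
  define T where "T = J \<inter> ball t0 \<delta>"
  have T: "convex T" "t0 \<in> T" "T \<subseteq> J"
    using convex_Int[OF is_interval_convex[OF J(1)] convex_ball] J(2) \<open>\<delta> > 0\<close> by (auto simp: T_def)
  define g where "g s = p s (\<gamma> s)" for s
  have g: "continuous_on {x0 - \<rho>..x0 + \<rho>} g" "\<And>s. s \<in> {x0 - \<rho>..x0 + \<rho>} \<Longrightarrow> g s \<noteq> 0"
    using continuous_on_compose2[OF continuous_p continuous_on_Pair[OF continuous_on_id \<gamma>_cont]] \<gamma>
    by (auto simp: g_def abs_le_iff)
  have reduced: "u t \<in> {x0 - \<rho>..x0 + \<rho>} \<and> v t = \<gamma> (u t) \<and> (u has_real_derivative g (u t)) (at t within T)"
    if sol: "\<And>t. t \<in> J \<Longrightarrow> (u has_real_derivative p (u t) (v t)) (at t within J)"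
      "\<And>t. t \<in> J \<Longrightarrow> (v has_real_derivative q (u t) (v t)) (at t within J)"
      and "u t0 = x0" "v t0 = y0"
      and box: "\<And>t. t \<in> T \<Longrightarrow> \<bar>u t - x0\<bar> \<le> \<rho> \<and> \<bar>v t - y0\<bar> \<le> r"
      and "t \<in> T" for u v t
  proof -
    have "stream_function x0 y0 (u t) (v t) = stream_function x0 y0 (u t0) (v t0)"
      using sol T \<open>t \<in> T\<close> by (intro stream_function_constant_on_solution) (auto intro: DERIV_subset)
    then have "v t = \<gamma> (u t)"
      using level box[OF \<open>t \<in> T\<close>] \<open>u t0 = x0\<close> \<open>v t0 = y0\<close> by (simp add: stream_function_def)
    with sol(1)[of t] box[OF \<open>t \<in> T\<close>] T(3) \<open>t \<in> T\<close> show ?thesis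
      by (auto simp: g_def abs_le_iff intro: DERIV_subset)
  qed
  have "x t = \<xi> t \<and> y t = \<eta> t" if "t \<in> T" for t
  proof -
    have box: "(\<bar>x t - x0\<bar> \<le> \<rho> \<and> \<bar>y t - y0\<bar> \<le> r) \<and> (\<bar>\<xi> t - x0\<bar> \<le> \<rho> \<and> \<bar>\<eta> t - y0\<bar> \<le> r)"
      if "t \<in> T" for t
      using close that init \<open>\<rho> > 0\<close> \<open>r > 0\<close> unfolding T_def by (cases "t = t0") (auto simp: dist_commute)
    have r1: "x s \<in> {x0 - \<rho>..x0 + \<rho>} \<and> y s = \<gamma> (x s) \<and> (x has_real_derivative g (x s)) (at s within T)"
      and r2: "\<xi> s \<in> {x0 - \<rho>..x0 + \<rho>} \<and> \<eta> s = \<gamma> (\<xi> s) \<and> (\<xi> has_real_derivative g (\<xi> s)) (at s within T)"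
      if "s \<in> T" for s
      by (rule reduced; use sol1 sol2 init box that in simp)+
    have "x t = \<xi> t"
      by (rule autonomous_ode_nonvanishing_unique[OF g T(1,2) that]) (use r1 r2 init in auto)
    with r1[OF that] r2[OF that] show ?thesis
      by simp
  qed
  with \<open>\<delta> > 0\<close> show ?thesis
    by (auto simp: T_def dist_real_def)
qed

end

section \<open>Uniqueness of trajectories\<close>

lemma (in planar_flux_free) planar_flux_free_swap: "planar_flux_free (\<lambda>x y. q y x) (\<lambda>x y. p y x)"
proof
  have swap: "continuous_on UNIV (\<lambda>z. f (snd z) (fst z))" if "continuous_on UNIV (\<lambda>z. f (fst z) (snd z))"
    for f :: "real \<Rightarrow> real \<Rightarrow> real"
    using continuous_on_compose2[OF that continuous_on_swap] by (simp add: prod.swap_def)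
  show "continuous_on UNIV (\<lambda>z. q (snd z) (fst z))" "continuous_on UNIV (\<lambda>z. p (snd z) (fst z))"
    by (simp_all add: swap continuous_p continuous_q)
  show "integral {c..d} (\<lambda>y. q y b - q y a) + integral {a..b} (\<lambda>x. p d x - p c x) = 0"
    if "a < b" "c < d" for a b c d
    using flux_free[OF that(2,1)] by simp
qed

lemma has_vector_derivative_vec_nth:
  assumes "(X has_vector_derivative v) F"
  shows "((\<lambda>t. X t $ i) has_real_derivative v $ i) F"
proof -
  have "((\<lambda>t. X t $ i) has_derivative (\<lambda>h. (h *\<^sub>R v) $ i)) F"
    using bounded_linear.has_derivative[OF bounded_linear_vec_nth assms[unfolded has_vector_derivative_def]] .
  moreover have "(\<lambda>h. (h *\<^sub>R v) $ i) = (*) (v $ i)"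
    by (auto simp: fun_eq_iff mult.commute)
  ultimately show ?thesis
    by (simp add: has_field_derivative_def)
qed

lemma planar_flux_free_weakly_div_free:
  fixes u :: "real^2 \<Rightarrow> real^2"
  assumes "continuous_on UNIV u" "weakly_div_free u"
  shows "planar_flux_free (\<lambda>x y. u (vector [x, y]) $ 1) (\<lambda>x y. u (vector [x, y]) $ 2)"
proof
  have "continuous_on UNIV (\<lambda>z. u (vector [fst z, snd z]) $ i)" for i
    by (intro continuous_intros continuous_on_compose2[OF assms(1)] continuous_on_vector2) auto
  then show "continuous_on UNIV (\<lambda>z. u (vector [fst z, snd z]) $ 1)"
    "continuous_on UNIV (\<lambda>z. u (vector [fst z, snd z]) $ 2)"
    by blast+
qed (use flux_rectangle_eq_0[OF assms] in auto)

lemma div_free_solutions_locally_equal: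
  fixes u :: "real^2 \<Rightarrow> real^2" and X Y :: "real \<Rightarrow> real^2"
  assumes u: "continuous_on UNIV u" "weakly_div_free u"
    and J: "is_interval J" "t0 \<in> J"
    and X: "\<And>t. t \<in> J \<Longrightarrow> (X has_vector_derivative u (X t)) (at t within J)"
    and Y: "\<And>t. t \<in> J \<Longrightarrow> (Y has_vector_derivative u (Y t)) (at t within J)"
    and "X t0 = Y t0" "u (X t0) \<noteq> 0"
  shows "\<exists>\<delta>>0. \<forall>t\<in>J. \<bar>t - t0\<bar> < \<delta> \<longrightarrow> X t = Y t"
proof -
  define p where "p x y = u (vector [x, y]) $ 1" for x y
  define q where "q x y = u (vector [x, y]) $ 2" for x y
  interpret planar_flux_free p q
    unfolding p_def q_def by (rule planar_flux_free_weakly_div_free[OF u])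
  interpret swapped: planar_flux_free "\<lambda>x y. q y x" "\<lambda>x y. p y x"
    by (rule planar_flux_free_swap)
  have u_eq: "u z = vector [p (z$1) (z$2), q (z$1) (z$2)]" for z
    by (simp add: p_def q_def vec_eq_iff forall_2 vector2_eta)
  have component_ode: "((\<lambda>t. Z t $ 1) has_real_derivative p (Z t $ 1) (Z t $ 2)) (at t within J) \<and>
      ((\<lambda>t. Z t $ 2) has_real_derivative q (Z t $ 1) (Z t $ 2)) (at t within J)"
    if "\<And>t. t \<in> J \<Longrightarrow> (Z has_vector_derivative u (Z t)) (at t within J)" "t \<in> J" for Z t
    using has_vector_derivative_vec_nth[OF that(1)[OF that(2)], of 1]
      has_vector_derivative_vec_nth[OF that(1)[OF that(2)], of 2]
    by (simp add: u_eq)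
  have XY: "\<And>t. t \<in> J \<Longrightarrow> ((\<lambda>t. X t $ 1) has_real_derivative p (X t $ 1) (X t $ 2)) (at t within J)"
    "\<And>t. t \<in> J \<Longrightarrow> ((\<lambda>t. X t $ 2) has_real_derivative q (X t $ 1) (X t $ 2)) (at t within J)"
    "\<And>t. t \<in> J \<Longrightarrow> ((\<lambda>t. Y t $ 1) has_real_derivative p (Y t $ 1) (Y t $ 2)) (at t within J)"
    "\<And>t. t \<in> J \<Longrightarrow> ((\<lambda>t. Y t $ 2) has_real_derivative q (Y t $ 1) (Y t $ 2)) (at t within J)"
    using component_ode[OF X] component_ode[OF Y] by simp_all
  have "p (X t0 $ 1) (X t0 $ 2) \<noteq> 0 \<or> q (X t0 $ 1) (X t0 $ 2) \<noteq> 0"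
    using \<open>u (X t0) \<noteq> 0\<close> by (auto simp: u_eq vec_eq_iff forall_2)
  then have "\<exists>\<delta>>0. \<forall>t\<in>J. \<bar>t - t0\<bar> < \<delta> \<longrightarrow> X t $ 1 = Y t $ 1 \<and> X t $ 2 = Y t $ 2"
  proof
    assume "p (X t0 $ 1) (X t0 $ 2) \<noteq> 0"
    then show ?thesis
      using XY \<open>X t0 = Y t0\<close>
      by (intro solutions_locally_unique[where x="\<lambda>t. X t $ 1" and y="\<lambda>t. X t $ 2"
          and \<xi>="\<lambda>t. Y t $ 1" and \<eta>="\<lambda>t. Y t $ 2", OF _ J]) auto
  next
    assume "q (X t0 $ 1) (X t0 $ 2) \<noteq> 0"
    then have "\<exists>\<delta>>0. \<forall>t\<in>J. \<bar>t - t0\<bar> < \<delta> \<longrightarrow> X t $ 2 = Y t $ 2 \<and> X t $ 1 = Y t $ 1"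
      using XY \<open>X t0 = Y t0\<close>
      by (intro swapped.solutions_locally_unique[where x="\<lambda>t. X t $ 2" and y="\<lambda>t. X t $ 1"
          and \<xi>="\<lambda>t. Y t $ 2" and \<eta>="\<lambda>t. Y t $ 1", OF _ J]) auto
    then show ?thesis
      by auto
  qed
  then show ?thesis
    by (simp add: vec_eq_iff forall_2)
qed

lemma locally_equal_imp_equal:
  fixes X Y :: "real \<Rightarrow> 'a::real_normed_vector"
  assumes "connected I" "t0 \<in> I" "X t0 = Y t0" "continuous_on I X" "continuous_on I Y"
    and local: "\<And>t. t \<in> I \<Longrightarrow> X t = Y t \<Longrightarrow> \<exists>\<delta>>0. \<forall>s\<in>I. \<bar>s - t\<bar> < \<delta> \<longrightarrow> X s = Y s"
    and "t \<in> I"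
  shows "X t = Y t"
proof -
  define E where "E = {t \<in> I. X t = Y t}"
  have "closedin (top_of_set I) {t \<in> I. X t - Y t = 0}"
    using assms(4,5) by (intro continuous_closedin_preimage_constant continuous_intros)
  then have "closedin (top_of_set I) E"
    by (simp add: E_def)
  moreover have "openin (top_of_set I) E"
    unfolding openin_euclidean_subtopology_iff E_def using local by (force simp: dist_real_def)
  ultimately have "E = I"
    using assms(1-3) unfolding connected_clopen E_def by blast
  with \<open>t \<in> I\<close> show ?thesis
    by (auto simp: E_def)
qed

theorem theorem5p1:
  fixes u :: "real^2 \<Rightarrow> real^2" and D :: "(real^2) set" and a :: "real^2"
    and I :: "real set" and X Y :: "real \<Rightarrow> real^2"
  assumes "continuous_on UNIV u"
    and "weakly_div_free u"
    and "open D" and "connected D"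
    and "\<forall>x\<in>D. u x \<noteq> 0"
    and "a \<in> D"
    and "is_interval I" and "0 \<in> I"
    and "\<forall>t\<in>I. X t \<in> D" and "\<forall>t\<in>I. Y t \<in> D"
    and "\<forall>t\<in>I. (X has_vector_derivative u (X t)) (at t within I)"
    and "\<forall>t\<in>I. (Y has_vector_derivative u (Y t)) (at t within I)"
    and "X 0 = a" and "Y 0 = a"
  shows "\<forall>t\<in>I. X t = Y t"
proof
  note u = assms(1,2) and I = assms(7,8) and sol = assms(11,12)[rule_format]
  fix t assume "t \<in> I"
  show "X t = Y t"
  proof (rule locally_equal_imp_equal[OF is_interval_connected[OF I(1)] I(2)])
    show "continuous_on I X" "continuous_on I Y"
      using sol by (auto intro: continuous_at_imp_continuous_on has_vector_derivative_continuous
          simp: continuous_on_eq_continuous_within)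
    show "\<exists>\<delta>>0. \<forall>s\<in>I. \<bar>s - t\<bar> < \<delta> \<longrightarrow> X s = Y s" if "t \<in> I" "X t = Y t" for t
      using that assms(5,9) by (intro div_free_solutions_locally_equal[OF u I(1) that(1) sol]) auto
  qed (use assms(13,14) \<open>t \<in> I\<close> in auto)
qed

end
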